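(* Let $(M,G,J)$ be a conformally balanced KT manifold of complex dimension $m$ with torsion $H$ and Lee form $\theta=2d\Phi$, and let $E\to M$ be a complex vector bundle with connection $A$ and curvature $F$. Suppose $F$ satisfies the Donaldson equations: $F^{2,0}=F^{0,2}=0$ (with respect to $J$) and $\Omega^{ij}F_{ij}=0$. Then $F$ satisfies the field equation $$\nabla^{(+)i}\big(e^{-2\Phi}F_{ij}\big)=0,$$ where $\nabla^{(+)}$ acts on the form indices of $F$ and the gauge connection $A$ acts on its bundle indices, and indices are raised with $G$.
   Context: Let $(M,G,J)$ be a Hermitian manifold of real dimension $2m$ with Levi-Civita connection $\nabla$ (Christoffel symbols $\Gamma_A{}^M{}_N$), and let $H$ be a real 3-form. Define connections $\nabla^{(\pm)}$ with Christoffel symbols $\Gamma^{(\pm)}{}_A{}^M{}_N=\Gamma_A{}^M{}_N\pm\tfrac12 H^M{}_{AN}$, i.e. $\nabla^{(\pm)}_MY^N=\nabla_MY^N\pm\tfrac12 H^N{}_{MR}Y^R$, extended to forms in the usual way. $(M,G,J)$ is a Kähler with torsion (KT) manifold with torsion $H$ if $\nabla^{(+)}J=0$. The Kähler form is $\Omega_{ij}=G_{ik}J^k{}_j$, and the Lee form is $\theta_i=\tfrac12 J^j{}_iH_{jkl}\Omega^{kl}$. A KT manifold is conformally balanced if $\theta=2d\Phi$ for some real function $\Phi$ on $M$. *)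

theory Defs
  imports "HOL-Analysis.Analysis"
begin

(* Points of a coordinate chart are
   x :: real^'n (real dimension CARD('n) = 2m); coordinate indices are
   elements of the finite type 'n. *)

definition pd :: "(real^'n \<Rightarrow> 'b::real_normed_vector) \<Rightarrow> 'n \<Rightarrow> real^'n \<Rightarrow> 'b" where
  "pd f i x = frechet_derivative f (at x) (axis i 1)"

fun Ck :: "nat \<Rightarrow> (real^'n) set \<Rightarrow> (real^'n \<Rightarrow> 'b::real_normed_vector) \<Rightarrow> bool" where
  "Ck 0 U f = continuous_on U f"
| "Ck (Suc k) U f = (continuous_on U f \<and> f differentiable_on U \<and> (\<forall>i. Ck k U (pd f i)))"

definition smooth_fn :: "(real^'n) set \<Rightarrow> (real^'n \<Rightarrow> 'b::real_normed_vector) \<Rightarrow> bool" where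
  "smooth_fn U f \<longleftrightarrow> (\<forall>k. Ck k U f)"

definition Ginv :: "(real^'n \<Rightarrow> 'n \<Rightarrow> 'n \<Rightarrow> real) \<Rightarrow> real^'n \<Rightarrow> 'n \<Rightarrow> 'n \<Rightarrow> real" where
  "Ginv G x i j = matrix_inv (\<chi> a b. G x a b) $ i $ j"

(* Levi-Civita Christoffel symbols  LC G x k i j = \<Gamma>_i{}^k{}_j = \<Gamma>^k_{ij} *)
definition LC :: "(real^'n \<Rightarrow> 'n \<Rightarrow> 'n \<Rightarrow> real) \<Rightarrow> real^'n \<Rightarrow> 'n \<Rightarrow> 'n \<Rightarrow> 'n \<Rightarrow> real" where
  "LC G x k i j = (1/2) * (\<Sum>l\<in>UNIV. Ginv G x k l *
      (pd (\<lambda>y. G y l j) i x + pd (\<lambda>y. G y l i) j x - pd (\<lambda>y. G y i j) l x))"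

definition Hup :: "(real^'n \<Rightarrow> 'n \<Rightarrow> 'n \<Rightarrow> real) \<Rightarrow> (real^'n \<Rightarrow> 'n \<Rightarrow> 'n \<Rightarrow> 'n \<Rightarrow> real)
     \<Rightarrow> real^'n \<Rightarrow> 'n \<Rightarrow> 'n \<Rightarrow> 'n \<Rightarrow> real" where
  "Hup G H x k i j = (\<Sum>l\<in>UNIV. Ginv G x k l * H x l i j)"

(* \<Gamma>^{(+)}{}_A{}^M{}_N = \<Gamma>_A{}^M{}_N + 1/2 H^M{}_{AN};  Gplus G H x a m n *)
definition Gplus :: "(real^'n \<Rightarrow> 'n \<Rightarrow> 'n \<Rightarrow> real) \<Rightarrow> (real^'n \<Rightarrow> 'n \<Rightarrow> 'n \<Rightarrow> 'n \<Rightarrow> real)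
     \<Rightarrow> real^'n \<Rightarrow> 'n \<Rightarrow> 'n \<Rightarrow> 'n \<Rightarrow> real" where
  "Gplus G H x a m n = LC G x m a n + (1/2) * Hup G H x m a n"

definition riem_metric :: "(real^'n) set \<Rightarrow> (real^'n \<Rightarrow> 'n \<Rightarrow> 'n \<Rightarrow> real) \<Rightarrow> bool" where
  "riem_metric U G \<longleftrightarrow> (\<forall>i j. smooth_fn U (\<lambda>x. G x i j)) \<and>
     (\<forall>x\<in>U. \<forall>i j. G x i j = G x j i) \<and>
     (\<forall>x\<in>U. \<forall>v::real^'n. v \<noteq> 0 \<longrightarrow> (\<Sum>i\<in>UNIV. \<Sum>j\<in>UNIV. G x i j * v$i * v$j) > 0)"

(* J x k j = J^k{}_j ; Nijenhuis tensor N^k{}_{ij} *)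
definition nijenhuis :: "(real^'n \<Rightarrow> 'n \<Rightarrow> 'n \<Rightarrow> real) \<Rightarrow> real^'n \<Rightarrow> 'n \<Rightarrow> 'n \<Rightarrow> 'n \<Rightarrow> real" where
  "nijenhuis J x k i j =
     (\<Sum>l\<in>UNIV. J x l i * pd (\<lambda>y. J y k j) l x - J x l j * pd (\<lambda>y. J y k i) l x
        - J x k l * (pd (\<lambda>y. J y l j) i x - pd (\<lambda>y. J y l i) j x))"

definition hermitian :: "(real^'n) set \<Rightarrow> (real^'n \<Rightarrow> 'n \<Rightarrow> 'n \<Rightarrow> real) \<Rightarrow> (real^'n \<Rightarrow> 'n \<Rightarrow> 'n \<Rightarrow> real) \<Rightarrow> bool" where
  "hermitian U G J \<longleftrightarrow> riem_metric U G \<and>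
     (\<forall>k j. smooth_fn U (\<lambda>x. J x k j)) \<and>
     (\<forall>x\<in>U. \<forall>k j. (\<Sum>l\<in>UNIV. J x k l * J x l j) = (if k = j then -1 else 0)) \<and>
     (\<forall>x\<in>U. \<forall>i j. (\<Sum>k\<in>UNIV. \<Sum>l\<in>UNIV. J x k i * J x l j * G x k l) = G x i j) \<and>
     (\<forall>x\<in>U. \<forall>k i j. nijenhuis J x k i j = 0)"

definition three_form :: "(real^'n) set \<Rightarrow> (real^'n \<Rightarrow> 'n \<Rightarrow> 'n \<Rightarrow> 'n \<Rightarrow> real) \<Rightarrow> bool" where
  "three_form U H \<longleftrightarrow> (\<forall>i j k. smooth_fn U (\<lambda>x. H x i j k)) \<and>
     (\<forall>x\<in>U. \<forall>i j k. H x i j k = - H x j i k \<and> H x i j k = - H x i k j)"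

(* KT: \<nabla>^{(+)}_i J^k{}_j = 0 *)
definition KT :: "(real^'n) set \<Rightarrow> (real^'n \<Rightarrow> 'n \<Rightarrow> 'n \<Rightarrow> real) \<Rightarrow> (real^'n \<Rightarrow> 'n \<Rightarrow> 'n \<Rightarrow> real)
     \<Rightarrow> (real^'n \<Rightarrow> 'n \<Rightarrow> 'n \<Rightarrow> 'n \<Rightarrow> real) \<Rightarrow> bool" where
  "KT U G J H \<longleftrightarrow> hermitian U G J \<and> three_form U H \<and>
     (\<forall>x\<in>U. \<forall>i k j. pd (\<lambda>y. J y k j) i x
        + (\<Sum>l\<in>UNIV. Gplus G H x i k l * J x l j)
        - (\<Sum>l\<in>UNIV. Gplus G H x i l j * J x k l) = 0)"

definition Om :: "(real^'n \<Rightarrow> 'n \<Rightarrow> 'n \<Rightarrow> real) \<Rightarrow> (real^'n \<Rightarrow> 'n \<Rightarrow> 'n \<Rightarrow> real) \<Rightarrow> real^'n \<Rightarrow> 'n \<Rightarrow> 'n \<Rightarrow> real" where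
  "Om G J x i j = (\<Sum>k\<in>UNIV. G x i k * J x k j)"

definition Omup :: "(real^'n \<Rightarrow> 'n \<Rightarrow> 'n \<Rightarrow> real) \<Rightarrow> (real^'n \<Rightarrow> 'n \<Rightarrow> 'n \<Rightarrow> real) \<Rightarrow> real^'n \<Rightarrow> 'n \<Rightarrow> 'n \<Rightarrow> real" where
  "Omup G J x k l = (\<Sum>a\<in>UNIV. \<Sum>b\<in>UNIV. Ginv G x k a * Ginv G x l b * Om G J x a b)"

definition Lee :: "(real^'n \<Rightarrow> 'n \<Rightarrow> 'n \<Rightarrow> real) \<Rightarrow> (real^'n \<Rightarrow> 'n \<Rightarrow> 'n \<Rightarrow> real)
     \<Rightarrow> (real^'n \<Rightarrow> 'n \<Rightarrow> 'n \<Rightarrow> 'n \<Rightarrow> real) \<Rightarrow> real^'n \<Rightarrow> 'n \<Rightarrow> real" where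
  "Lee G J H x i = (1/2) * (\<Sum>j\<in>UNIV. \<Sum>k\<in>UNIV. \<Sum>l\<in>UNIV. J x j i * H x j k l * Omup G J x k l)"

definition conf_balanced :: "(real^'n) set \<Rightarrow> (real^'n \<Rightarrow> 'n \<Rightarrow> 'n \<Rightarrow> real) \<Rightarrow> (real^'n \<Rightarrow> 'n \<Rightarrow> 'n \<Rightarrow> real)
     \<Rightarrow> (real^'n \<Rightarrow> 'n \<Rightarrow> 'n \<Rightarrow> 'n \<Rightarrow> real) \<Rightarrow> (real^'n \<Rightarrow> real) \<Rightarrow> bool" where
  "conf_balanced U G J H \<Phi> \<longleftrightarrow> KT U G J H \<and> smooth_fn U \<Phi> \<and>
     (\<forall>x\<in>U. \<forall>i. Lee G J H x i = 2 * pd \<Phi> i x)"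

(* gauge connection A_i(x) (gl(r,C)-valued 1-form in a local trivialisation)
   and its curvature F_{ij} = \<partial>_i A_j - \<partial>_j A_i + [A_i, A_j] *)
definition curv :: "(real^'n \<Rightarrow> 'n \<Rightarrow> complex^'r^'r) \<Rightarrow> real^'n \<Rightarrow> 'n \<Rightarrow> 'n \<Rightarrow> complex^'r^'r" where
  "curv A x i j = pd (\<lambda>y. A y j) i x - pd (\<lambda>y. A y i) j x + (A x i ** A x j - A x j ** A x i)"

(* F^{2,0} = F^{0,2} = 0 w.r.t. J, i.e. F is of type (1,1):
   the (2,0)+(0,2) part (1/2)(F_{ij} - J^k{}_i J^l{}_j F_{kl}) vanishes *)
definition type11 :: "(real^'n \<Rightarrow> 'n \<Rightarrow> 'n \<Rightarrow> real) \<Rightarrow> (real^'n \<Rightarrow> 'n \<Rightarrow> 'n \<Rightarrow> 'b::real_vector) \<Rightarrow> real^'n \<Rightarrow> bool" where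
  "type11 J F x \<longleftrightarrow> (\<forall>i j. (\<Sum>k\<in>UNIV. \<Sum>l\<in>UNIV. (J x k i * J x l j) *\<^sub>R F x k l) = F x i j)"

definition Dplus :: "(real^'n \<Rightarrow> 'n \<Rightarrow> 'n \<Rightarrow> real) \<Rightarrow> (real^'n \<Rightarrow> 'n \<Rightarrow> 'n \<Rightarrow> 'n \<Rightarrow> real)
     \<Rightarrow> (real^'n \<Rightarrow> 'n \<Rightarrow> complex^'r^'r) \<Rightarrow> (real^'n \<Rightarrow> 'n \<Rightarrow> 'n \<Rightarrow> complex^'r^'r)
     \<Rightarrow> real^'n \<Rightarrow> 'n \<Rightarrow> 'n \<Rightarrow> 'n \<Rightarrow> complex^'r^'r" where
  "Dplus G H A T x k i j = pd (\<lambda>y. T y i j) k x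
     - (\<Sum>l\<in>UNIV. Gplus G H x k l i *\<^sub>R T x l j)
     - (\<Sum>l\<in>UNIV. Gplus G H x k l j *\<^sub>R T x i l)
     + (A x k ** T x i j - T x i j ** A x k)"

end

theory Submission
  imports Defs
begin

(*
  Write N_kij for the gauge-covariant nabla(+)-derivative of the curvature F_ij. Since nabla(+)
  preserves both G and J, every N_k is again J-invariant, and the Omega-trace of N_k is the
  derivative of the Omega-trace of F, hence zero. The torsion of nabla(+) is H, so the Bianchi
  identity for F becomes a cyclic identity N_kij + N_ijk + N_jki = -(terms H.F). Contracting it
  with Omega^jk, J-invariance turns the N-terms into J applied to the divergence G^ik N_kij; two of
  the H-terms cancel because Omega^jk G^lm F_lk is symmetric in j and m, and the third is the Lee
  form. This gives G^ik N_kij = theta^i F_ij, and since theta = 2 dPhi this is exactly the term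
  produced by differentiating the factor exp(-2 Phi).
*)

section \<open>Tensor algebra at a point\<close>

lemma sum_rotate3:
  "(\<Sum>i\<in>A. \<Sum>a\<in>B. \<Sum>b\<in>C. f i a b) = (\<Sum>a\<in>B. \<Sum>b\<in>C. \<Sum>i\<in>A. (f i a b::'a::comm_monoid_add))"
  by (subst sum.swap, rule sum.cong[OF refl], rule sum.swap)

lemma eq_minus_self_iff: "(x::'a::real_vector) = - x \<longleftrightarrow> x = 0"
proof
  assume "x = - x"
  then have "2 *\<^sub>R x = 0" by (metis scaleR_2 add.right_inverse)
  then show "x = 0" by simp
qed simp

definition J_invariant :: "('n::finite \<Rightarrow> 'n \<Rightarrow> real) \<Rightarrow> ('n \<Rightarrow> 'n \<Rightarrow> 'v::real_vector) \<Rightarrow> bool" where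
  "J_invariant J F \<longleftrightarrow> (\<forall>i j. (\<Sum>a\<in>UNIV. \<Sum>b\<in>UNIV. (J a i * J b j) *\<^sub>R F a b) = F i j)"

lemma J_invariantD: "J_invariant J F \<Longrightarrow> F i j = (\<Sum>a\<in>UNIV. \<Sum>b\<in>UNIV. (J a i * J b j) *\<^sub>R F a b)"
  by (simp add: J_invariant_def)

lemma J_invariant_transpose: "J_invariant J F \<Longrightarrow> J_invariant J (\<lambda>a b. F b a)"
  unfolding J_invariant_def by (subst sum.swap) (simp add: mult.commute)

(* A pointwise model of a gauge-covariant derivative of a 2-form: dF k i j stands for d_k F_ij,
   ad k for the action of the gauge field A_k on the bundle indices and \<Gamma> k l i for \<Gamma>_k^l_i. *)
definition cov_deriv ::
  "('n::finite \<Rightarrow> 'n \<Rightarrow> 'n \<Rightarrow> real) \<Rightarrow> ('n \<Rightarrow> 'v \<Rightarrow> 'v) \<Rightarrow> ('n \<Rightarrow> 'n \<Rightarrow> 'n \<Rightarrow> 'v::real_vector)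
    \<Rightarrow> ('n \<Rightarrow> 'n \<Rightarrow> 'v) \<Rightarrow> 'n \<Rightarrow> 'n \<Rightarrow> 'n \<Rightarrow> 'v" where
  "cov_deriv \<Gamma> ad dF F k i j = dF k i j + ad k (F i j)
     - (\<Sum>l\<in>UNIV. \<Gamma> k l i *\<^sub>R F l j) - (\<Sum>l\<in>UNIV. \<Gamma> k l j *\<^sub>R F i l)"

lemma cov_deriv_antisym:
  assumes F: "\<And>a b. F a b = - F b a" and dF: "\<And>k a b. dF k a b = - dF k b a"
    and ad: "\<And>k. linear (ad k)"
  shows "cov_deriv \<Gamma> ad dF F k i j = - cov_deriv \<Gamma> ad dF F k j i"
proof -
  have "(\<Sum>l\<in>UNIV. \<Gamma> k l j *\<^sub>R F l i) = - (\<Sum>l\<in>UNIV. \<Gamma> k l j *\<^sub>R F i l)"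
       "(\<Sum>l\<in>UNIV. \<Gamma> k l i *\<^sub>R F j l) = - (\<Sum>l\<in>UNIV. \<Gamma> k l i *\<^sub>R F l j)"
    by (simp_all add: sum_negf[symmetric] F[of _ i] F[of j])
  then show ?thesis
    unfolding cov_deriv_def using dF[of k j i] F[of j i] linear_neg[OF ad] by simp
qed

lemma J_invariant_connection_term:
  fixes J dJ \<Gamma> :: "'n::finite \<Rightarrow> 'n \<Rightarrow> real" and F :: "'n \<Rightarrow> 'n \<Rightarrow> 'v::real_vector"
  assumes F: "J_invariant J F"
    and dJ: "\<And>a i. dJ a i = - (\<Sum>l\<in>UNIV. \<Gamma> a l * J l i) + (\<Sum>l\<in>UNIV. \<Gamma> l i * J a l)"
  shows "(\<Sum>a\<in>UNIV. \<Sum>b\<in>UNIV. (dJ a i * J b j) *\<^sub>R F a b)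
       + (\<Sum>a\<in>UNIV. \<Sum>b\<in>UNIV. (J a i * J b j) *\<^sub>R (\<Sum>l\<in>UNIV. \<Gamma> l a *\<^sub>R F l b))
       = (\<Sum>l\<in>UNIV. \<Gamma> l i *\<^sub>R F l j)"
proof -
  define X where "X = (\<Sum>a\<in>UNIV. \<Sum>b\<in>UNIV. \<Sum>l\<in>UNIV. (\<Gamma> a l * J l i * J b j) *\<^sub>R F a b)"
  have dJJ: "dJ a i * J b j = - (\<Sum>l\<in>UNIV. \<Gamma> a l * J l i * J b j) + (\<Sum>l\<in>UNIV. \<Gamma> l i * J a l * J b j)" for a b
    by (simp add: dJ sum_distrib_right sum_distrib_left algebra_simps)
  have "(\<Sum>a\<in>UNIV. \<Sum>b\<in>UNIV. (dJ a i * J b j) *\<^sub>R F a b)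
      = (\<Sum>a\<in>UNIV. \<Sum>b\<in>UNIV. - (\<Sum>l\<in>UNIV. (\<Gamma> a l * J l i * J b j) *\<^sub>R F a b)
          + (\<Sum>l\<in>UNIV. (\<Gamma> l i * J a l * J b j) *\<^sub>R F a b))"
    by (simp only: dJJ scaleR_left_distrib scaleR_minus_left scaleR_sum_left)
  also have "\<dots> = - X + (\<Sum>a\<in>UNIV. \<Sum>b\<in>UNIV. \<Sum>l\<in>UNIV. (\<Gamma> l i * J a l * J b j) *\<^sub>R F a b)"
    by (simp add: X_def sum.distrib sum_negf sum_subtractf)
  also have "(\<Sum>a\<in>UNIV. \<Sum>b\<in>UNIV. \<Sum>l\<in>UNIV. (\<Gamma> l i * J a l * J b j) *\<^sub>R F a b)
      = (\<Sum>l\<in>UNIV. \<Sum>a\<in>UNIV. \<Sum>b\<in>UNIV. (\<Gamma> l i * J a l * J b j) *\<^sub>R F a b)"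
    by (rule sum_rotate3[symmetric])
  also have "\<dots> = (\<Sum>l\<in>UNIV. \<Gamma> l i *\<^sub>R (\<Sum>a\<in>UNIV. \<Sum>b\<in>UNIV. (J a l * J b j) *\<^sub>R F a b))"
    by (simp add: scaleR_sum_right mult.assoc)
  also have "\<dots> = (\<Sum>l\<in>UNIV. \<Gamma> l i *\<^sub>R F l j)"
    by (simp flip: J_invariantD[OF F])
  finally have "(\<Sum>a\<in>UNIV. \<Sum>b\<in>UNIV. (dJ a i * J b j) *\<^sub>R F a b) = - X + (\<Sum>l\<in>UNIV. \<Gamma> l i *\<^sub>R F l j)" .
  moreover have "(\<Sum>a\<in>UNIV. \<Sum>b\<in>UNIV. (J a i * J b j) *\<^sub>R (\<Sum>l\<in>UNIV. \<Gamma> l a *\<^sub>R F l b)) = X"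
  proof -
    have "(\<Sum>a\<in>UNIV. \<Sum>b\<in>UNIV. (J a i * J b j) *\<^sub>R (\<Sum>l\<in>UNIV. \<Gamma> l a *\<^sub>R F l b))
        = (\<Sum>a\<in>UNIV. \<Sum>b\<in>UNIV. \<Sum>l\<in>UNIV. (\<Gamma> l a * J a i * J b j) *\<^sub>R F l b)"
      by (simp add: scaleR_sum_right mult_ac)
    also have "\<dots> = (\<Sum>l\<in>UNIV. \<Sum>a\<in>UNIV. \<Sum>b\<in>UNIV. (\<Gamma> l a * J a i * J b j) *\<^sub>R F l b)"
      by (rule sum_rotate3[symmetric])
    also have "\<dots> = X"
      unfolding X_def by (rule sum.cong[OF refl], rule sum.swap)
    finally show ?thesis .
  qed
  ultimately show ?thesis by simp
qed

lemma cov_deriv_J_invariant: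
  fixes J :: "'n::finite \<Rightarrow> 'n \<Rightarrow> real" and dJ \<Gamma> :: "'n \<Rightarrow> 'n \<Rightarrow> 'n \<Rightarrow> real"
    and F :: "'n \<Rightarrow> 'n \<Rightarrow> 'v::real_vector" and dF :: "'n \<Rightarrow> 'n \<Rightarrow> 'n \<Rightarrow> 'v"
  assumes F: "J_invariant J F"
    and dF: "\<And>k i j. dF k i j = (\<Sum>a\<in>UNIV. \<Sum>b\<in>UNIV. (dJ k a i * J b j + J a i * dJ k b j) *\<^sub>R F a b)
                 + (\<Sum>a\<in>UNIV. \<Sum>b\<in>UNIV. (J a i * J b j) *\<^sub>R dF k a b)"
    and dJ: "\<And>k a i. dJ k a i = - (\<Sum>l\<in>UNIV. \<Gamma> k a l * J l i) + (\<Sum>l\<in>UNIV. \<Gamma> k l i * J a l)"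
    and ad: "\<And>k. linear (ad k)"
  shows "J_invariant J (cov_deriv \<Gamma> ad dF F k)"
  unfolding J_invariant_def
proof (intro allI)
  fix i j
  define D where "D = (\<Sum>a\<in>UNIV. \<Sum>b\<in>UNIV. (J a i * J b j) *\<^sub>R dF k a b)"
  define T1 where "T1 = (\<Sum>a\<in>UNIV. \<Sum>b\<in>UNIV. (dJ k a i * J b j) *\<^sub>R F a b)"
  define T2 where "T2 = (\<Sum>a\<in>UNIV. \<Sum>b\<in>UNIV. (J a i * dJ k b j) *\<^sub>R F a b)"
  define T3 where "T3 = (\<Sum>a\<in>UNIV. \<Sum>b\<in>UNIV. (J a i * J b j) *\<^sub>R (\<Sum>l\<in>UNIV. \<Gamma> k l a *\<^sub>R F l b))"
  define T4 where "T4 = (\<Sum>a\<in>UNIV. \<Sum>b\<in>UNIV. (J a i * J b j) *\<^sub>R (\<Sum>l\<in>UNIV. \<Gamma> k l b *\<^sub>R F a l))"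
  have first: "T1 + T3 = (\<Sum>l\<in>UNIV. \<Gamma> k l i *\<^sub>R F l j)"
    unfolding T1_def T3_def by (rule J_invariant_connection_term[OF F dJ])
  have "(\<Sum>a\<in>UNIV. \<Sum>b\<in>UNIV. (dJ k a j * J b i) *\<^sub>R F b a)
      + (\<Sum>a\<in>UNIV. \<Sum>b\<in>UNIV. (J a j * J b i) *\<^sub>R (\<Sum>l\<in>UNIV. \<Gamma> k l a *\<^sub>R F b l))
      = (\<Sum>l\<in>UNIV. \<Gamma> k l j *\<^sub>R F i l)"
    using J_invariant_connection_term[OF J_invariant_transpose[OF F] dJ] by simp
  then have second: "T2 + T4 = (\<Sum>l\<in>UNIV. \<Gamma> k l j *\<^sub>R F i l)"
    unfolding T2_def T4_def by (subst (1 2) sum.swap) (simp add: mult.commute)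
  have dF_split: "dF k i j = D + (T1 + T2)"
    unfolding D_def T1_def T2_def dF[of k i j] by (simp add: scaleR_left_distrib sum.distrib)
  have ad_term: "(\<Sum>a\<in>UNIV. \<Sum>b\<in>UNIV. (J a i * J b j) *\<^sub>R ad k (F a b)) = ad k (F i j)"
    by (subst (2) J_invariantD[OF F]) (simp add: linear_sum[OF ad] linear_scale[OF ad])
  have "(\<Sum>a\<in>UNIV. \<Sum>b\<in>UNIV. (J a i * J b j) *\<^sub>R cov_deriv \<Gamma> ad dF F k a b)
      = D + ad k (F i j) - T3 - T4"
    unfolding D_def T3_def T4_def cov_deriv_def
    by (simp add: scaleR_right_distrib scaleR_right_diff_distrib sum.distrib sum_subtractf
        flip: ad_term)
  also have "\<dots> = (D + (T1 + T2)) + ad k (F i j) - (T1 + T3) - (T2 + T4)"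
    by (simp add: algebra_simps)
  also have "\<dots> = cov_deriv \<Gamma> ad dF F k i j"
    unfolding cov_deriv_def dF_split first second ..
  finally show "(\<Sum>a\<in>UNIV. \<Sum>b\<in>UNIV. (J a i * J b j) *\<^sub>R cov_deriv \<Gamma> ad dF F k a b)
      = cov_deriv \<Gamma> ad dF F k i j" .
qed

lemma cov_deriv_trace:
  fixes Om dOm :: "'n::finite \<Rightarrow> 'n \<Rightarrow> real" and \<Gamma> :: "'n \<Rightarrow> 'n \<Rightarrow> 'n \<Rightarrow> real"
    and F :: "'n \<Rightarrow> 'n \<Rightarrow> 'v::real_vector" and dF :: "'n \<Rightarrow> 'n \<Rightarrow> 'n \<Rightarrow> 'v"
  assumes trace: "(\<Sum>j\<in>UNIV. \<Sum>k\<in>UNIV. Om j k *\<^sub>R F j k) = 0"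
    and dtrace: "(\<Sum>j\<in>UNIV. \<Sum>k\<in>UNIV. dOm j k *\<^sub>R F j k + Om j k *\<^sub>R dF i j k) = 0"
    and dOm: "\<And>j k. dOm j k = - (\<Sum>l\<in>UNIV. \<Gamma> i j l * Om l k) - (\<Sum>l\<in>UNIV. \<Gamma> i k l * Om j l)"
    and ad: "linear (ad i)"
  shows "(\<Sum>j\<in>UNIV. \<Sum>k\<in>UNIV. Om j k *\<^sub>R cov_deriv \<Gamma> ad dF F i j k) = 0"
proof -
  define A1 where "A1 = (\<Sum>j\<in>UNIV. \<Sum>k\<in>UNIV. \<Sum>l\<in>UNIV. (\<Gamma> i j l * Om l k) *\<^sub>R F j k)"
  define A2 where "A2 = (\<Sum>j\<in>UNIV. \<Sum>k\<in>UNIV. \<Sum>l\<in>UNIV. (\<Gamma> i k l * Om j l) *\<^sub>R F j k)"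
  have "(\<Sum>j\<in>UNIV. \<Sum>k\<in>UNIV. Om j k *\<^sub>R dF i j k) = - (\<Sum>j\<in>UNIV. \<Sum>k\<in>UNIV. dOm j k *\<^sub>R F j k)"
    using dtrace by (simp add: sum.distrib eq_neg_iff_add_eq_0 add.commute)
  also have "\<dots> = A1 + A2"
    by (simp add: A1_def A2_def dOm scaleR_left_diff_distrib scaleR_sum_left sum_subtractf sum_negf)
  finally have dF_term: "(\<Sum>j\<in>UNIV. \<Sum>k\<in>UNIV. Om j k *\<^sub>R dF i j k) = A1 + A2" .
  have "(\<Sum>j\<in>UNIV. \<Sum>k\<in>UNIV. Om j k *\<^sub>R ad i (F j k)) = ad i (\<Sum>j\<in>UNIV. \<Sum>k\<in>UNIV. Om j k *\<^sub>R F j k)"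
    by (simp add: linear_sum[OF ad] linear_scale[OF ad])
  then have ad_term: "(\<Sum>j\<in>UNIV. \<Sum>k\<in>UNIV. Om j k *\<^sub>R ad i (F j k)) = 0"
    by (simp add: trace linear_0[OF ad])
  have "(\<Sum>j\<in>UNIV. \<Sum>k\<in>UNIV. Om j k *\<^sub>R (\<Sum>l\<in>UNIV. \<Gamma> i l j *\<^sub>R F l k))
      = (\<Sum>j\<in>UNIV. \<Sum>k\<in>UNIV. \<Sum>l\<in>UNIV. (\<Gamma> i l j * Om j k) *\<^sub>R F l k)"
    by (simp add: scaleR_sum_right mult.commute)
  also have "\<dots> = (\<Sum>l\<in>UNIV. \<Sum>k\<in>UNIV. \<Sum>j\<in>UNIV. (\<Gamma> i l j * Om j k) *\<^sub>R F l k)"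
    by (subst sum_rotate3) (rule sum.swap)
  finally have first: "(\<Sum>j\<in>UNIV. \<Sum>k\<in>UNIV. Om j k *\<^sub>R (\<Sum>l\<in>UNIV. \<Gamma> i l j *\<^sub>R F l k)) = A1"
    unfolding A1_def .
  have "(\<Sum>j\<in>UNIV. \<Sum>k\<in>UNIV. Om j k *\<^sub>R (\<Sum>l\<in>UNIV. \<Gamma> i l k *\<^sub>R F j l))
      = (\<Sum>j\<in>UNIV. \<Sum>k\<in>UNIV. \<Sum>l\<in>UNIV. (\<Gamma> i l k * Om j k) *\<^sub>R F j l)"
    by (simp add: scaleR_sum_right mult.commute)
  also have "\<dots> = A2"
    unfolding A2_def by (rule sum.cong[OF refl], rule sum.swap)
  finally have second: "(\<Sum>j\<in>UNIV. \<Sum>k\<in>UNIV. Om j k *\<^sub>R (\<Sum>l\<in>UNIV. \<Gamma> i l k *\<^sub>R F j l)) = A2" .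
  show ?thesis
    unfolding cov_deriv_def
    by (simp add: scaleR_right_distrib scaleR_right_diff_distrib sum.distrib sum_subtractf
        dF_term ad_term first second)
qed

lemma cov_deriv_cyclic:
  fixes \<Gamma> T :: "'n::finite \<Rightarrow> 'n \<Rightarrow> 'n \<Rightarrow> real"
    and F :: "'n \<Rightarrow> 'n \<Rightarrow> 'v::real_vector" and dF :: "'n \<Rightarrow> 'n \<Rightarrow> 'n \<Rightarrow> 'v"
  assumes torsion: "\<And>k l i. \<Gamma> k l i - \<Gamma> i l k = T l k i"
    and F: "\<And>a b. F a b = - F b a"
    and bianchi: "dF k i j + dF i j k + dF j k i + ad k (F i j) + ad i (F j k) + ad j (F k i) = 0"
  shows "cov_deriv \<Gamma> ad dF F k i j + cov_deriv \<Gamma> ad dF F i j k + cov_deriv \<Gamma> ad dF F j k i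
       = - (\<Sum>l\<in>UNIV. T l k i *\<^sub>R F l j + T l j k *\<^sub>R F l i + T l i j *\<^sub>R F l k)"
proof -
  have pair: "\<Gamma> p l q *\<^sub>R F l r + \<Gamma> q l p *\<^sub>R F r l = T l p q *\<^sub>R F l r" for p q r l
    using torsion[of p l q] F[of r l] by (simp flip: scaleR_left_diff_distrib)
  have "\<Gamma> k l i *\<^sub>R F l j + \<Gamma> k l j *\<^sub>R F i l + \<Gamma> i l j *\<^sub>R F l k + \<Gamma> i l k *\<^sub>R F j l
      + \<Gamma> j l k *\<^sub>R F l i + \<Gamma> j l i *\<^sub>R F k l
      = (\<Gamma> k l i *\<^sub>R F l j + \<Gamma> i l k *\<^sub>R F j l) + (\<Gamma> j l k *\<^sub>R F l i + \<Gamma> k l j *\<^sub>R F i l)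
        + (\<Gamma> i l j *\<^sub>R F l k + \<Gamma> j l i *\<^sub>R F k l)" for l
    by (simp only: add_ac)
  then have "\<Gamma> k l i *\<^sub>R F l j + \<Gamma> k l j *\<^sub>R F i l + \<Gamma> i l j *\<^sub>R F l k + \<Gamma> i l k *\<^sub>R F j l
      + \<Gamma> j l k *\<^sub>R F l i + \<Gamma> j l i *\<^sub>R F k l
      = T l k i *\<^sub>R F l j + T l j k *\<^sub>R F l i + T l i j *\<^sub>R F l k" for l
    by (simp only: pair)
  then show ?thesis
    using bianchi by (simp add: cov_deriv_def sum.distrib[symmetric] algebra_simps)
qed

lemma matrix_add_rdistrib: "((A::'a::semiring_1^'n^'m) + B) ** C = A ** C + B ** C"
  by (vector matrix_matrix_mult_def sum.distrib[symmetric] field_simps)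

lemma matrix_diff_ldistrib: "(A::'a::ring_1^'n^'m) ** (B - C) = A ** B - A ** C"
  by (vector matrix_matrix_mult_def sum_subtractf[symmetric] field_simps)

lemma matrix_diff_rdistrib: "((A::'a::ring_1^'n^'m) - B) ** C = A ** C - B ** C"
  by (vector matrix_matrix_mult_def sum_subtractf[symmetric] field_simps)

lemma linear_matrix_commutator: "linear (\<lambda>v::'a::real_algebra_1^'r^'r. a ** v - v ** a)"
  by (rule linearI)
    (simp_all add: matrix_add_ldistrib matrix_add_rdistrib matrix_scalar_ac scalar_matrix_assoc algebra_simps)

(* da k i and dda k i j stand for d_k A_i and d_k d_i A_j. *)
lemma gauge_bianchi:
  fixes a :: "'n \<Rightarrow> 'a::comm_ring_1^'r^'r" and da :: "'n \<Rightarrow> 'n \<Rightarrow> 'a^'r^'r"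
    and dda :: "'n \<Rightarrow> 'n \<Rightarrow> 'n \<Rightarrow> 'a^'r^'r"
  assumes dda_sym: "\<And>k i j. dda k i j = dda i k j"
  defines "F \<equiv> \<lambda>i j. da i j - da j i + (a i ** a j - a j ** a i)"
    and "dF \<equiv> \<lambda>k i j. dda k i j - dda k j i + ((a i ** da k j + da k i ** a j) - (a j ** da k i + da k j ** a i))"
  shows "dF k i j + dF i j k + dF j k i
      + (a k ** F i j - F i j ** a k) + (a i ** F j k - F j k ** a i) + (a j ** F k i - F k i ** a j) = 0"
proof -
  have "dda k i j - dda k j i + (dda i j k - dda i k j) + (dda j k i - dda j i k) = 0"
    using dda_sym[of k i j] dda_sym[of k j i] dda_sym[of i j k] by (simp add: algebra_simps)
  then show ?thesis
    unfolding F_def dF_def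
    by (simp add: matrix_add_ldistrib matrix_add_rdistrib matrix_diff_ldistrib matrix_diff_rdistrib
        matrix_mul_assoc algebra_simps)
qed

definition raise_index :: "('n::finite \<Rightarrow> 'n \<Rightarrow> real) \<Rightarrow> ('n \<Rightarrow> 'n \<Rightarrow> 'n \<Rightarrow> real) \<Rightarrow> 'n \<Rightarrow> 'n \<Rightarrow> 'n \<Rightarrow> real" where
  "raise_index gi T l a b = (\<Sum>m\<in>UNIV. gi l m * T m a b)"

lemma raise_index_antisym:
  "(\<And>a b c. H a b c = - H a c b) \<Longrightarrow> raise_index gi H l a b = - raise_index gi H l b a"
  unfolding raise_index_def by (metis (no_types, lifting) mult_minus_right sum.cong sum_negf)

(* The Kaehler form with both indices raised. *)
definition omega_up :: "('n::finite \<Rightarrow> 'n \<Rightarrow> real) \<Rightarrow> ('n \<Rightarrow> 'n \<Rightarrow> real) \<Rightarrow> 'n \<Rightarrow> 'n \<Rightarrow> real" where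
  "omega_up gi J j k = (\<Sum>b\<in>UNIV. J j b * gi b k)"

lemma omega_raise_index:
  "(\<Sum>j\<in>UNIV. \<Sum>k\<in>UNIV. X j k * raise_index gi H l j k) = (\<Sum>m\<in>UNIV. gi l m * (\<Sum>j\<in>UNIV. \<Sum>k\<in>UNIV. X j k * H m j k))"
proof -
  have "(\<Sum>j\<in>UNIV. \<Sum>k\<in>UNIV. X j k * raise_index gi H l j k)
      = (\<Sum>j\<in>UNIV. \<Sum>k\<in>UNIV. \<Sum>m\<in>UNIV. gi l m * (X j k * H m j k))"
    by (simp add: raise_index_def sum_distrib_left mult_ac)
  also have "\<dots> = (\<Sum>m\<in>UNIV. \<Sum>j\<in>UNIV. \<Sum>k\<in>UNIV. gi l m * (X j k * H m j k))"
    by (rule sum_rotate3[symmetric])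
  finally show ?thesis by (simp add: sum_distrib_left)
qed

lemma derivative_parallel_product:
  fixes J gi dJ dgi \<Gamma> :: "'n::finite \<Rightarrow> 'n \<Rightarrow> real"
  assumes dJ: "\<And>j b. dJ j b = - (\<Sum>l\<in>UNIV. \<Gamma> j l * J l b) + (\<Sum>l\<in>UNIV. \<Gamma> l b * J j l)"
    and dgi: "\<And>b k. dgi b k = - (\<Sum>l\<in>UNIV. \<Gamma> b l * gi l k) - (\<Sum>l\<in>UNIV. \<Gamma> k l * gi b l)"
  shows "(\<Sum>b\<in>UNIV. dJ j b * gi b k + J j b * dgi b k)
       = - (\<Sum>l\<in>UNIV. \<Gamma> j l * omega_up gi J l k) - (\<Sum>l\<in>UNIV. \<Gamma> k l * omega_up gi J j l)"
proof -
  define Z where "Z = (\<Sum>b\<in>UNIV. \<Sum>l\<in>UNIV. \<Gamma> l b * J j l * gi b k)"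
  have "(\<Sum>b\<in>UNIV. dJ j b * gi b k) = - (\<Sum>b\<in>UNIV. \<Sum>l\<in>UNIV. \<Gamma> j l * J l b * gi b k) + Z"
    by (simp add: Z_def dJ algebra_simps sum_distrib_right sum_distrib_left sum.distrib sum_negf sum_subtractf)
  moreover have "(\<Sum>b\<in>UNIV. \<Sum>l\<in>UNIV. \<Gamma> j l * J l b * gi b k) = (\<Sum>l\<in>UNIV. \<Gamma> j l * omega_up gi J l k)"
    by (subst sum.swap) (simp add: omega_up_def sum_distrib_left mult_ac)
  ultimately have first: "(\<Sum>b\<in>UNIV. dJ j b * gi b k) = - (\<Sum>l\<in>UNIV. \<Gamma> j l * omega_up gi J l k) + Z"
    by simp
  have "(\<Sum>b\<in>UNIV. \<Sum>l\<in>UNIV. J j b * \<Gamma> b l * gi l k) = Z"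
    unfolding Z_def by (subst sum.swap) (simp add: mult_ac)
  moreover have "(\<Sum>b\<in>UNIV. \<Sum>l\<in>UNIV. \<Gamma> k l * J j b * gi b l) = (\<Sum>l\<in>UNIV. \<Gamma> k l * omega_up gi J j l)"
    by (subst sum.swap) (simp add: omega_up_def sum_distrib_left mult_ac)
  ultimately have second: "(\<Sum>b\<in>UNIV. J j b * dgi b k) = - Z - (\<Sum>l\<in>UNIV. \<Gamma> k l * omega_up gi J j l)"
    by (simp add: dgi algebra_simps sum_distrib_left sum_subtractf sum_negf)
  show ?thesis using first second by (simp add: sum.distrib)
qed

locale metric_point =
  fixes g gi :: "'n::finite \<Rightarrow> 'n \<Rightarrow> real"
  assumes g_gi: "(\<Sum>b\<in>UNIV. g a b * gi b c) = (if a = c then 1 else 0)"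
    and gi_g: "(\<Sum>b\<in>UNIV. gi a b * g b c) = (if a = c then 1 else 0)"
    and g_sym: "g a b = g b a"
begin

lemma gi_sym: "gi a c = gi c a"
proof -
  have delta: "(\<Sum>d\<in>UNIV. gi d a * g d b) = (if b = a then 1 else 0)" for b
    using g_gi[of b a] by (simp add: g_sym[of b] mult.commute)
  have "gi a c = (\<Sum>b\<in>UNIV. (\<Sum>d\<in>UNIV. gi d a * g d b) * gi b c)"
    by (simp add: delta if_distrib if_distribR cong: if_cong)
  also have "\<dots> = (\<Sum>d\<in>UNIV. gi d a * (\<Sum>b\<in>UNIV. g d b * gi b c))"
    by (simp add: sum_distrib_left sum_distrib_right mult.assoc) (rule sum.swap)
  also have "\<dots> = gi c a"
    by (simp add: g_gi if_distrib if_distribR cong: if_cong)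
  finally show ?thesis .
qed

lemma lower_raised_index: "(\<Sum>l\<in>UNIV. (\<Sum>m\<in>UNIV. gi l m * X m) * g l b) = X b"
proof -
  have "(\<Sum>l\<in>UNIV. (\<Sum>m\<in>UNIV. gi l m * X m) * g l b) = (\<Sum>l\<in>UNIV. \<Sum>m\<in>UNIV. g b l * gi l m * X m)"
    by (simp add: sum_distrib_right sum_distrib_left g_sym[of _ b] mult_ac)
  also have "\<dots> = (\<Sum>m\<in>UNIV. (\<Sum>l\<in>UNIV. g b l * gi l m) * X m)"
    by (subst sum.swap) (simp add: sum_distrib_right)
  also have "\<dots> = X b"
    by (simp add: g_gi if_distrib if_distribR cong: if_cong)
  finally show ?thesis .
qed

lemma metric_compatible:
  fixes dg \<Gamma> H :: "'n \<Rightarrow> 'n \<Rightarrow> 'n \<Rightarrow> real"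
  assumes dg_sym: "\<And>c a b. dg c a b = dg c b a"
    and \<Gamma>: "\<And>k l i. \<Gamma> k l i = 1/2 * (\<Sum>m\<in>UNIV. gi l m * (dg k m i + dg i m k - dg m k i))
                             + 1/2 * (\<Sum>m\<in>UNIV. gi l m * H m k i)"
    and H: "\<And>a b c. H a b c = - H b a c" "\<And>a b c. H a b c = - H a c b"
  shows "dg i a b = (\<Sum>l\<in>UNIV. \<Gamma> i l a * g l b) + (\<Sum>l\<in>UNIV. \<Gamma> i l b * g a l)"
proof -
  have lowered: "(\<Sum>l\<in>UNIV. \<Gamma> i l a * g l b) = 1/2 * (dg i b a + dg a b i - dg b i a) + 1/2 * H b i a" for a b
  proof -
    have "(\<Sum>l\<in>UNIV. \<Gamma> i l a * g l b)
        = (\<Sum>l\<in>UNIV. (\<Sum>m\<in>UNIV. gi l m * (1/2 * (dg i m a + dg a m i - dg m i a) + 1/2 * H m i a)) * g l b)"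
      by (simp add: \<Gamma> algebra_simps sum.distrib sum_subtractf sum_distrib_left)
    then show ?thesis by (simp only: lower_raised_index)
  qed
  have "H b i a + H a i b = 0"
    using H(1)[of b i a] H(2)[of i b a] H(1)[of a i b] by simp
  then show ?thesis
    using lowered[of a b] lowered[of b a] g_sym[of a] dg_sym[of i b a] dg_sym[of a b i] dg_sym[of b a i]
    by (simp add: algebra_simps)
qed

lemma inverse_metric_derivative:
  fixes dg dgi \<Gamma> :: "'n \<Rightarrow> 'n \<Rightarrow> real"
  assumes dprod: "\<And>a c. (\<Sum>b\<in>UNIV. dg a b * gi b c) + (\<Sum>b\<in>UNIV. g a b * dgi b c) = 0"
    and compat: "\<And>a b. dg a b = (\<Sum>l\<in>UNIV. \<Gamma> l a * g l b) + (\<Sum>l\<in>UNIV. \<Gamma> l b * g a l)"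
  shows "dgi k c = - (\<Sum>l\<in>UNIV. \<Gamma> k l * gi l c) - (\<Sum>l\<in>UNIV. \<Gamma> c l * gi k l)"
proof -
  have "dgi k c = (\<Sum>b\<in>UNIV. (\<Sum>a\<in>UNIV. gi k a * g a b) * dgi b c)"
    by (simp add: gi_g if_distrib if_distribR cong: if_cong)
  also have "\<dots> = (\<Sum>a\<in>UNIV. gi k a * (\<Sum>b\<in>UNIV. g a b * dgi b c))"
    by (simp add: sum_distrib_left sum_distrib_right mult_ac) (rule sum.swap)
  also have "\<dots> = - (\<Sum>a\<in>UNIV. gi k a * (\<Sum>b\<in>UNIV. dg a b * gi b c))"
  proof -
    have "(\<Sum>b\<in>UNIV. g a b * dgi b c) = - (\<Sum>b\<in>UNIV. dg a b * gi b c)" for a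
      using dprod[of a c] by (simp add: eq_neg_iff_add_eq_0 add.commute)
    then show ?thesis by (simp add: sum_negf)
  qed
  also have "(\<Sum>a\<in>UNIV. gi k a * (\<Sum>b\<in>UNIV. dg a b * gi b c))
      = (\<Sum>a\<in>UNIV. \<Sum>l\<in>UNIV. gi k a * \<Gamma> l a * (\<Sum>b\<in>UNIV. g l b * gi b c))
        + (\<Sum>b\<in>UNIV. \<Sum>l\<in>UNIV. \<Gamma> l b * (\<Sum>a\<in>UNIV. gi k a * g a l) * gi b c)"
  proof -
    have "(\<Sum>a\<in>UNIV. gi k a * (\<Sum>b\<in>UNIV. dg a b * gi b c))
      = (\<Sum>a\<in>UNIV. \<Sum>b\<in>UNIV. \<Sum>l\<in>UNIV. gi k a * \<Gamma> l a * g l b * gi b c)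
        + (\<Sum>a\<in>UNIV. \<Sum>b\<in>UNIV. \<Sum>l\<in>UNIV. gi k a * \<Gamma> l b * g a l * gi b c)"
      by (simp add: compat algebra_simps sum_distrib_left sum_distrib_right sum.distrib)
    moreover have "(\<Sum>a\<in>UNIV. \<Sum>b\<in>UNIV. \<Sum>l\<in>UNIV. gi k a * \<Gamma> l a * g l b * gi b c)
        = (\<Sum>a\<in>UNIV. \<Sum>l\<in>UNIV. gi k a * \<Gamma> l a * (\<Sum>b\<in>UNIV. g l b * gi b c))"
      by (simp add: sum_distrib_left mult_ac) (rule sum.cong[OF refl], rule sum.swap)
    moreover have "(\<Sum>a\<in>UNIV. \<Sum>b\<in>UNIV. \<Sum>l\<in>UNIV. gi k a * \<Gamma> l b * g a l * gi b c)
        = (\<Sum>b\<in>UNIV. \<Sum>l\<in>UNIV. \<Sum>a\<in>UNIV. gi k a * \<Gamma> l b * g a l * gi b c)"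
      by (rule sum_rotate3)
    ultimately show ?thesis
      by (simp add: sum_distrib_left sum_distrib_right mult_ac)
  qed
  also have "- (\<dots>) = - (\<Sum>l\<in>UNIV. \<Gamma> k l * gi l c) - (\<Sum>l\<in>UNIV. \<Gamma> c l * gi k l)"
    by (simp only: g_gi gi_g) (simp add: if_distrib if_distribR mult.commute cong: if_cong)
  finally show ?thesis .
qed

end

locale hermitian_point = metric_point +
  fixes J :: "'n::finite \<Rightarrow> 'n \<Rightarrow> real"
  assumes J_squared: "(\<Sum>l\<in>UNIV. J k l * J l j) = (if k = j then -1 else 0)"
    and J_isometry: "(\<Sum>k\<in>UNIV. \<Sum>l\<in>UNIV. J k i * J l j * g k l) = g i j"
begin

abbreviation omega :: "'n \<Rightarrow> 'n \<Rightarrow> real" where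
  "omega \<equiv> omega_up gi J"

lemma J_transpose_g: "(\<Sum>k\<in>UNIV. J k i * g k l) = - (\<Sum>k\<in>UNIV. g i k * J k l)"
proof -
  have "J k i * g k l = J k i * (\<Sum>p\<in>UNIV. \<Sum>q\<in>UNIV. J p k * J q l * g p q)" for k
    by (simp add: J_isometry)
  then have "(\<Sum>k\<in>UNIV. J k i * g k l) = (\<Sum>k\<in>UNIV. \<Sum>p\<in>UNIV. \<Sum>q\<in>UNIV. J k i * (J p k * J q l * g p q))"
    by (simp add: sum_distrib_left)
  also have "\<dots> = (\<Sum>p\<in>UNIV. \<Sum>q\<in>UNIV. \<Sum>k\<in>UNIV. J k i * (J p k * J q l * g p q))"
    by (rule sum_rotate3)
  also have "\<dots> = (\<Sum>p\<in>UNIV. \<Sum>q\<in>UNIV. (\<Sum>k\<in>UNIV. J p k * J k i) * (J q l * g p q))"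
    by (simp add: sum_distrib_left sum_distrib_right mult_ac)
  also have "\<dots> = - (\<Sum>k\<in>UNIV. g i k * J k l)"
    by (subst sum.swap) (simp add: J_squared if_distrib if_distribR sum_negf mult.commute cong: if_cong)
  finally show ?thesis .
qed

lemma omega_antisym: "omega a b = - omega b a"
proof -
  have "omega a b = (\<Sum>i\<in>UNIV. \<Sum>l\<in>UNIV. gi b i * (\<Sum>k\<in>UNIV. J k i * g k l) * gi l a)"
  proof -
    have "(\<Sum>i\<in>UNIV. \<Sum>l\<in>UNIV. gi b i * (\<Sum>k\<in>UNIV. J k i * g k l) * gi l a)
        = (\<Sum>i\<in>UNIV. \<Sum>k\<in>UNIV. gi b i * J k i * (\<Sum>l\<in>UNIV. g k l * gi l a))"
      by (simp add: sum_distrib_left sum_distrib_right mult_ac) (rule sum.cong[OF refl], rule sum.swap)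
    also have "\<dots> = omega a b"
      by (simp add: omega_up_def g_gi gi_sym[of b] if_distrib if_distribR mult.commute cong: if_cong)
    finally show ?thesis by simp
  qed
  also have "\<dots> = - (\<Sum>i\<in>UNIV. \<Sum>l\<in>UNIV. gi b i * (\<Sum>k\<in>UNIV. g i k * J k l) * gi l a)"
    by (simp add: J_transpose_g sum_negf)
  also have "(\<Sum>i\<in>UNIV. \<Sum>l\<in>UNIV. gi b i * (\<Sum>k\<in>UNIV. g i k * J k l) * gi l a) = omega b a"
  proof -
    have "(\<Sum>i\<in>UNIV. \<Sum>l\<in>UNIV. gi b i * (\<Sum>k\<in>UNIV. g i k * J k l) * gi l a)
        = (\<Sum>i\<in>UNIV. \<Sum>l\<in>UNIV. \<Sum>k\<in>UNIV. (gi b i * g i k) * (J k l * gi l a))"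
      by (simp add: sum_distrib_left sum_distrib_right mult_ac)
    also have "\<dots> = (\<Sum>l\<in>UNIV. \<Sum>k\<in>UNIV. \<Sum>i\<in>UNIV. (gi b i * g i k) * (J k l * gi l a))"
      by (rule sum_rotate3)
    also have "\<dots> = omega b a"
      by (simp add: omega_up_def gi_g if_distrib if_distribR flip: sum_distrib_right cong: if_cong)
    finally show ?thesis .
  qed
  finally show ?thesis .
qed

lemma omega_J: "(\<Sum>k\<in>UNIV. omega j k * J a k) = gi j a"
proof -
  have "omega j k = - (\<Sum>b\<in>UNIV. J k b * gi b j)" for k
    using omega_antisym[of j k] by (simp add: omega_up_def)
  then have "(\<Sum>k\<in>UNIV. omega j k * J a k) = - (\<Sum>k\<in>UNIV. \<Sum>b\<in>UNIV. J a k * J k b * gi b j)"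
    by (simp add: sum_distrib_left sum_distrib_right sum_negf mult_ac)
  also have "\<dots> = - (\<Sum>b\<in>UNIV. (\<Sum>k\<in>UNIV. J a k * J k b) * gi b j)"
    by (subst sum.swap) (simp add: sum_distrib_right)
  also have "\<dots> = gi j a"
    by (simp add: J_squared gi_sym if_distrib if_distribR cong: if_cong)
  finally show ?thesis .
qed

lemma J_invariant_antisym_swap:
  fixes F :: "'n \<Rightarrow> 'n \<Rightarrow> 'v::real_vector"
  assumes F: "J_invariant J F" and F_anti: "\<And>a b. F a b = - F b a"
  shows "(\<Sum>i\<in>UNIV. J i j *\<^sub>R F l i) = (\<Sum>i\<in>UNIV. J i l *\<^sub>R F j i)"
proof -
  have "(\<Sum>i\<in>UNIV. J i j *\<^sub>R F l i)
      = (\<Sum>i\<in>UNIV. \<Sum>a\<in>UNIV. \<Sum>b\<in>UNIV. (J a l * (J b i * J i j)) *\<^sub>R F a b)"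
    by (subst J_invariantD[OF F]) (simp add: scaleR_sum_right mult_ac)
  also have "\<dots> = (\<Sum>a\<in>UNIV. \<Sum>b\<in>UNIV. (J a l * (\<Sum>i\<in>UNIV. J b i * J i j)) *\<^sub>R F a b)"
    by (subst sum_rotate3) (simp add: scaleR_sum_left sum_distrib_left)
  also have "\<dots> = (\<Sum>a\<in>UNIV. - (J a l *\<^sub>R F a j))"
    by (simp add: J_squared if_distrib if_distribR cong: if_cong)
  also have "\<dots> = (\<Sum>a\<in>UNIV. J a l *\<^sub>R F j a)"
    by (simp add: F_anti[of _ j])
  finally show ?thesis .
qed

lemma omega_contract_J_invariant:
  fixes X :: "'n \<Rightarrow> 'n \<Rightarrow> 'n \<Rightarrow> 'v::real_vector"
  assumes X: "\<And>j. J_invariant J (X j)"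
  shows "(\<Sum>j\<in>UNIV. \<Sum>k\<in>UNIV. omega j k *\<^sub>R X j k i)
       = (\<Sum>c\<in>UNIV. J c i *\<^sub>R (\<Sum>j\<in>UNIV. \<Sum>a\<in>UNIV. gi j a *\<^sub>R X j a c))"
proof -
  have "(\<Sum>j\<in>UNIV. \<Sum>k\<in>UNIV. omega j k *\<^sub>R X j k i)
      = (\<Sum>j\<in>UNIV. \<Sum>k\<in>UNIV. \<Sum>a\<in>UNIV. \<Sum>c\<in>UNIV. (omega j k * (J a k * J c i)) *\<^sub>R X j a c)"
    by (intro sum.cong refl, subst J_invariantD[OF X]) (simp add: scaleR_sum_right)
  also have "\<dots> = (\<Sum>j\<in>UNIV. \<Sum>a\<in>UNIV. \<Sum>c\<in>UNIV. ((\<Sum>k\<in>UNIV. omega j k * J a k) * J c i) *\<^sub>R X j a c)"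
    by (rule sum.cong[OF refl], subst sum_rotate3) (simp add: scaleR_sum_left sum_distrib_right mult.assoc)
  also have "\<dots> = (\<Sum>j\<in>UNIV. \<Sum>a\<in>UNIV. \<Sum>c\<in>UNIV. (gi j a * J c i) *\<^sub>R X j a c)"
    by (simp add: omega_J)
  also have "\<dots> = (\<Sum>c\<in>UNIV. \<Sum>j\<in>UNIV. \<Sum>a\<in>UNIV. (gi j a * J c i) *\<^sub>R X j a c)"
    by (rule sum_rotate3[symmetric])
  also have "\<dots> = (\<Sum>c\<in>UNIV. J c i *\<^sub>R (\<Sum>j\<in>UNIV. \<Sum>a\<in>UNIV. gi j a *\<^sub>R X j a c))"
    by (simp add: scaleR_sum_right mult.commute)
  finally show ?thesis .
qed

lemma omega_F_symmetric:
  fixes F :: "'n \<Rightarrow> 'n \<Rightarrow> 'v::real_vector"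
  assumes F: "J_invariant J F" and F_anti: "\<And>a b. F a b = - F b a"
  shows "(\<Sum>k\<in>UNIV. \<Sum>l\<in>UNIV. (omega m k * gi l j) *\<^sub>R F l k)
       = (\<Sum>k\<in>UNIV. \<Sum>l\<in>UNIV. (omega j k * gi l m) *\<^sub>R F l k)"
proof -
  have "(\<Sum>k\<in>UNIV. \<Sum>l\<in>UNIV. (omega j k * gi l m) *\<^sub>R F l k)
      = (\<Sum>k\<in>UNIV. \<Sum>l\<in>UNIV. \<Sum>a\<in>UNIV. \<Sum>b\<in>UNIV. ((omega j k * J b k) * (J a l * gi l m)) *\<^sub>R F a b)"
    by (intro sum.cong refl, subst J_invariantD[OF F]) (simp add: scaleR_sum_right mult_ac)
  also have "\<dots> = (\<Sum>k\<in>UNIV. \<Sum>a\<in>UNIV. \<Sum>b\<in>UNIV. \<Sum>l\<in>UNIV. ((omega j k * J b k) * (J a l * gi l m)) *\<^sub>R F a b)"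
    by (rule sum.cong[OF refl], rule sum_rotate3)
  also have "\<dots> = (\<Sum>a\<in>UNIV. \<Sum>b\<in>UNIV. \<Sum>k\<in>UNIV. \<Sum>l\<in>UNIV. ((omega j k * J b k) * (J a l * gi l m)) *\<^sub>R F a b)"
    by (rule sum_rotate3)
  also have "\<dots> = (\<Sum>a\<in>UNIV. \<Sum>b\<in>UNIV. ((\<Sum>k\<in>UNIV. omega j k * J b k) * (\<Sum>l\<in>UNIV. J a l * gi l m)) *\<^sub>R F a b)"
    by (simp add: scaleR_sum_left sum_distrib_left sum_distrib_right mult_ac)
  also have "\<dots> = (\<Sum>a\<in>UNIV. \<Sum>b\<in>UNIV. (gi j b * omega a m) *\<^sub>R F a b)"
    by (simp only: omega_J) (simp add: omega_up_def)
  also have "\<dots> = (\<Sum>a\<in>UNIV. \<Sum>b\<in>UNIV. (omega m a * gi b j) *\<^sub>R F b a)"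
  proof -
    have "(gi j b * omega a m) *\<^sub>R F a b = (omega m a * gi b j) *\<^sub>R F b a" for a b
      using omega_antisym[of m a] F_anti[of b a] gi_sym[of b j] by simp
    then show ?thesis by simp
  qed
  finally show ?thesis by (rule sym)
qed

lemma omega_torsion_term_vanishes:
  fixes F :: "'n \<Rightarrow> 'n \<Rightarrow> 'v::real_vector" and H :: "'n \<Rightarrow> 'n \<Rightarrow> 'n \<Rightarrow> real"
  assumes H: "\<And>a b c. H a b c = - H b a c" "\<And>a b c. H a b c = - H a c b"
    and F: "J_invariant J F" and F_anti: "\<And>a b. F a b = - F b a"
  shows "(\<Sum>j\<in>UNIV. \<Sum>k\<in>UNIV. omega j k *\<^sub>R (\<Sum>l\<in>UNIV. raise_index gi H l i j *\<^sub>R F l k)) = 0"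
proof -
  define Q where "Q j m = (\<Sum>k\<in>UNIV. \<Sum>l\<in>UNIV. (omega j k * gi l m) *\<^sub>R F l k)" for j m
  have "(\<Sum>j\<in>UNIV. \<Sum>k\<in>UNIV. omega j k *\<^sub>R (\<Sum>l\<in>UNIV. raise_index gi H l i j *\<^sub>R F l k))
      = (\<Sum>j\<in>UNIV. \<Sum>k\<in>UNIV. \<Sum>l\<in>UNIV. \<Sum>m\<in>UNIV. H m i j *\<^sub>R ((omega j k * gi l m) *\<^sub>R F l k))"
    by (simp add: raise_index_def scaleR_sum_right scaleR_sum_left mult_ac)
  also have "\<dots> = (\<Sum>j\<in>UNIV. \<Sum>m\<in>UNIV. H m i j *\<^sub>R Q j m)"
    unfolding Q_def
    by (rule sum.cong[OF refl], subst sum_rotate3[symmetric]) (simp add: scaleR_sum_right)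
  finally have P: "(\<Sum>j\<in>UNIV. \<Sum>k\<in>UNIV. omega j k *\<^sub>R (\<Sum>l\<in>UNIV. raise_index gi H l i j *\<^sub>R F l k))
      = (\<Sum>j\<in>UNIV. \<Sum>m\<in>UNIV. H m i j *\<^sub>R Q j m)" .
  have swap: "H m i j *\<^sub>R Q j m = - (H j i m *\<^sub>R Q m j)" for j m
    using H(1)[of m i j] H(2)[of i m j] H(1)[of i j m] omega_F_symmetric[OF F F_anti, of j m]
    by (simp add: Q_def)
  have "(\<Sum>j\<in>UNIV. \<Sum>m\<in>UNIV. H m i j *\<^sub>R Q j m) = (\<Sum>j\<in>UNIV. \<Sum>m\<in>UNIV. - (H j i m *\<^sub>R Q m j))"
    by (intro sum.cong refl swap)
  also have "\<dots> = - (\<Sum>m\<in>UNIV. \<Sum>j\<in>UNIV. H j i m *\<^sub>R Q m j)"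
    by (subst sum.swap) (simp add: sum_negf)
  finally show ?thesis
    unfolding P by (simp only: eq_minus_self_iff)
qed

(* The Omega-trace of the cyclic identity: J-invariance turns two of the N-terms into J applied to
   the divergence of N, the third is the vanishing trace. *)
lemma omega_contract_cyclic:
  fixes F :: "'n \<Rightarrow> 'n \<Rightarrow> 'v::real_vector" and N :: "'n \<Rightarrow> 'n \<Rightarrow> 'n \<Rightarrow> 'v"
    and H :: "'n \<Rightarrow> 'n \<Rightarrow> 'n \<Rightarrow> real"
  assumes H: "\<And>a b c. H a b c = - H b a c" "\<And>a b c. H a b c = - H a c b"
    and F: "J_invariant J F" and F_anti: "\<And>a b. F a b = - F b a"
    and N: "\<And>k. J_invariant J (N k)" and N_anti: "\<And>k a b. N k a b = - N k b a"
    and trace: "\<And>i. (\<Sum>j\<in>UNIV. \<Sum>k\<in>UNIV. omega j k *\<^sub>R N i j k) = 0"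
    and cyclic: "\<And>k i j. N k i j + N i j k + N j k i = - (\<Sum>l\<in>UNIV. raise_index gi H l k i *\<^sub>R F l j
                   + raise_index gi H l j k *\<^sub>R F l i + raise_index gi H l i j *\<^sub>R F l k)"
  shows "2 *\<^sub>R (\<Sum>c\<in>UNIV. J c i *\<^sub>R (\<Sum>j\<in>UNIV. \<Sum>a\<in>UNIV. gi j a *\<^sub>R N j a c))
       = - (\<Sum>l\<in>UNIV. (\<Sum>j\<in>UNIV. \<Sum>k\<in>UNIV. omega j k * raise_index gi H l j k) *\<^sub>R F l i)"
proof -
  let ?Hu = "raise_index gi H"
  have "omega j k *\<^sub>R N k i j = omega k j *\<^sub>R N k j i" for j k
    using omega_antisym[of j k] N_anti[of k i j] by simp
  then have "(\<Sum>j\<in>UNIV. \<Sum>k\<in>UNIV. omega j k *\<^sub>R N k i j) = (\<Sum>k\<in>UNIV. \<Sum>j\<in>UNIV. omega k j *\<^sub>R N k j i)"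
    by (subst sum.swap) simp
  then have "(\<Sum>j\<in>UNIV. \<Sum>k\<in>UNIV. omega j k *\<^sub>R (N i j k + N j k i + N k i j))
      = 2 *\<^sub>R (\<Sum>c\<in>UNIV. J c i *\<^sub>R (\<Sum>j\<in>UNIV. \<Sum>a\<in>UNIV. gi j a *\<^sub>R N j a c))"
    by (simp add: scaleR_right_distrib sum.distrib trace omega_contract_J_invariant[OF N] scaleR_2)
  moreover have "(\<Sum>j\<in>UNIV. \<Sum>k\<in>UNIV. omega j k *\<^sub>R (N i j k + N j k i + N k i j))
      = - ((\<Sum>j\<in>UNIV. \<Sum>k\<in>UNIV. omega j k *\<^sub>R (\<Sum>l\<in>UNIV. ?Hu l i j *\<^sub>R F l k))
         + (\<Sum>j\<in>UNIV. \<Sum>k\<in>UNIV. omega j k *\<^sub>R (\<Sum>l\<in>UNIV. ?Hu l k i *\<^sub>R F l j))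
         + (\<Sum>j\<in>UNIV. \<Sum>k\<in>UNIV. omega j k *\<^sub>R (\<Sum>l\<in>UNIV. ?Hu l j k *\<^sub>R F l i)))"
    by (simp add: cyclic scaleR_right_distrib scaleR_right_diff_distrib sum.distrib sum_subtractf sum_negf)
  moreover have "(\<Sum>j\<in>UNIV. \<Sum>k\<in>UNIV. omega j k *\<^sub>R (\<Sum>l\<in>UNIV. ?Hu l k i *\<^sub>R F l j))
      = (\<Sum>j\<in>UNIV. \<Sum>k\<in>UNIV. omega j k *\<^sub>R (\<Sum>l\<in>UNIV. ?Hu l i j *\<^sub>R F l k))"
  proof -
    have "omega k j *\<^sub>R (\<Sum>l\<in>UNIV. ?Hu l j i *\<^sub>R F l k) = omega j k *\<^sub>R (\<Sum>l\<in>UNIV. ?Hu l i j *\<^sub>R F l k)" for j k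
      using omega_antisym[of k j] raise_index_antisym[OF H(2), where gi = gi and a = j and b = i] by (simp add: sum_negf)
    then show ?thesis by (subst sum.swap) simp
  qed
  moreover have "(\<Sum>j\<in>UNIV. \<Sum>k\<in>UNIV. omega j k *\<^sub>R (\<Sum>l\<in>UNIV. ?Hu l j k *\<^sub>R F l i))
      = (\<Sum>l\<in>UNIV. (\<Sum>j\<in>UNIV. \<Sum>k\<in>UNIV. omega j k * ?Hu l j k) *\<^sub>R F l i)"
  proof -
    have "(\<Sum>j\<in>UNIV. \<Sum>k\<in>UNIV. omega j k *\<^sub>R (\<Sum>l\<in>UNIV. ?Hu l j k *\<^sub>R F l i))
        = (\<Sum>j\<in>UNIV. \<Sum>k\<in>UNIV. \<Sum>l\<in>UNIV. (omega j k * ?Hu l j k) *\<^sub>R F l i)"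
      by (simp add: scaleR_sum_right)
    also have "\<dots> = (\<Sum>l\<in>UNIV. \<Sum>j\<in>UNIV. \<Sum>k\<in>UNIV. (omega j k * ?Hu l j k) *\<^sub>R F l i)"
      by (rule sum_rotate3[symmetric])
    finally show ?thesis by (simp add: scaleR_sum_left)
  qed
  ultimately show ?thesis
    by (simp add: omega_torsion_term_vanishes[OF H F F_anti])
qed

lemma J_J_contract:
  fixes V :: "'n \<Rightarrow> 'v::real_vector"
  shows "(\<Sum>i\<in>UNIV. J i j *\<^sub>R (\<Sum>c\<in>UNIV. J c i *\<^sub>R V c)) = - V j"
proof -
  have "(\<Sum>i\<in>UNIV. J i j *\<^sub>R (\<Sum>c\<in>UNIV. J c i *\<^sub>R V c)) = (\<Sum>i\<in>UNIV. \<Sum>c\<in>UNIV. (J c i * J i j) *\<^sub>R V c)"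
    by (simp add: scaleR_sum_right mult.commute)
  also have "\<dots> = (\<Sum>c\<in>UNIV. (\<Sum>i\<in>UNIV. J c i * J i j) *\<^sub>R V c)"
    by (subst sum.swap) (simp add: scaleR_sum_left)
  finally show ?thesis by (simp add: J_squared if_distrib if_distribR cong: if_cong)
qed

lemma J_contract_raised:
  fixes F :: "'n \<Rightarrow> 'n \<Rightarrow> 'v::real_vector"
  assumes F: "J_invariant J F" and F_anti: "\<And>a b. F a b = - F b a"
  shows "(\<Sum>i\<in>UNIV. J i j *\<^sub>R (\<Sum>l\<in>UNIV. (\<Sum>m\<in>UNIV. gi l m * w m) *\<^sub>R F l i))
       = (\<Sum>m\<in>UNIV. w m *\<^sub>R (\<Sum>i\<in>UNIV. omega m i *\<^sub>R F i j))"
proof -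
  have lowered: "(\<Sum>l\<in>UNIV. gi l m *\<^sub>R (\<Sum>i\<in>UNIV. J i j *\<^sub>R F l i)) = (\<Sum>i\<in>UNIV. omega m i *\<^sub>R F i j)" for m
  proof -
    have "(\<Sum>l\<in>UNIV. gi l m *\<^sub>R (\<Sum>i\<in>UNIV. J i j *\<^sub>R F l i)) = (\<Sum>l\<in>UNIV. \<Sum>i\<in>UNIV. (J i l * gi l m) *\<^sub>R F j i)"
      by (simp add: J_invariant_antisym_swap[OF F F_anti] scaleR_sum_right mult.commute)
    also have "\<dots> = (\<Sum>i\<in>UNIV. omega i m *\<^sub>R F j i)"
      by (subst sum.swap) (simp add: omega_up_def scaleR_sum_left)
    also have "\<dots> = (\<Sum>i\<in>UNIV. omega m i *\<^sub>R F i j)"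
    proof -
      have "omega i m *\<^sub>R F j i = omega m i *\<^sub>R F i j" for i
        using omega_antisym[of i m] F_anti[of j i] by simp
      then show ?thesis by simp
    qed
    finally show ?thesis .
  qed
  have "(\<Sum>i\<in>UNIV. J i j *\<^sub>R (\<Sum>l\<in>UNIV. (\<Sum>m\<in>UNIV. gi l m * w m) *\<^sub>R F l i))
      = (\<Sum>i\<in>UNIV. \<Sum>l\<in>UNIV. \<Sum>m\<in>UNIV. (w m * gi l m * J i j) *\<^sub>R F l i)"
    by (simp add: scaleR_sum_right scaleR_sum_left sum_distrib_right mult_ac)
  also have "\<dots> = (\<Sum>m\<in>UNIV. \<Sum>i\<in>UNIV. \<Sum>l\<in>UNIV. (w m * gi l m * J i j) *\<^sub>R F l i)"
    by (rule sum_rotate3[symmetric])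
  also have "\<dots> = (\<Sum>m\<in>UNIV. \<Sum>l\<in>UNIV. \<Sum>i\<in>UNIV. (w m * gi l m * J i j) *\<^sub>R F l i)"
    by (rule sum.cong[OF refl], rule sum.swap)
  also have "\<dots> = (\<Sum>m\<in>UNIV. w m *\<^sub>R (\<Sum>l\<in>UNIV. gi l m *\<^sub>R (\<Sum>i\<in>UNIV. J i j *\<^sub>R F l i)))"
    by (simp add: scaleR_sum_right mult.assoc)
  finally show ?thesis by (simp add: lowered)
qed

lemma Lee_contraction:
  fixes F :: "'n \<Rightarrow> 'n \<Rightarrow> 'v::real_vector"
  shows "(\<Sum>i\<in>UNIV. \<Sum>k\<in>UNIV. (gi i k * (1/2 * (\<Sum>a\<in>UNIV. \<Sum>b\<in>UNIV. \<Sum>c\<in>UNIV. J a k * H a b c * omega b c))) *\<^sub>R F i j)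
       = (1/2) *\<^sub>R (\<Sum>m\<in>UNIV. (\<Sum>b\<in>UNIV. \<Sum>c\<in>UNIV. omega b c * H m b c) *\<^sub>R (\<Sum>i\<in>UNIV. omega m i *\<^sub>R F i j))"
proof -
  have "(\<Sum>i\<in>UNIV. \<Sum>k\<in>UNIV. (gi i k * (1/2 * (\<Sum>a\<in>UNIV. \<Sum>b\<in>UNIV. \<Sum>c\<in>UNIV. J a k * H a b c * omega b c))) *\<^sub>R F i j)
      = (1/2) *\<^sub>R (\<Sum>i\<in>UNIV. \<Sum>k\<in>UNIV. \<Sum>a\<in>UNIV. ((\<Sum>b\<in>UNIV. \<Sum>c\<in>UNIV. omega b c * H a b c) * (J a k * gi k i)) *\<^sub>R F i j)"
    by (simp add: scaleR_sum_right scaleR_sum_left sum_distrib_left sum_distrib_right gi_sym mult_ac)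
  also have "\<dots> = (1/2) *\<^sub>R (\<Sum>a\<in>UNIV. \<Sum>i\<in>UNIV. \<Sum>k\<in>UNIV. ((\<Sum>b\<in>UNIV. \<Sum>c\<in>UNIV. omega b c * H a b c) * (J a k * gi k i)) *\<^sub>R F i j)"
    by (rule arg_cong[where f = "scaleR (1/2)"], rule sum_rotate3[symmetric])
  also have "\<dots> = (1/2) *\<^sub>R (\<Sum>m\<in>UNIV. (\<Sum>b\<in>UNIV. \<Sum>c\<in>UNIV. omega b c * H m b c) *\<^sub>R (\<Sum>i\<in>UNIV. omega m i *\<^sub>R F i j))"
    by (simp add: omega_up_def scaleR_sum_right scaleR_sum_left sum_distrib_left)
  finally show ?thesis .
qed

lemma divergence_identity:
  fixes F :: "'n \<Rightarrow> 'n \<Rightarrow> 'v::real_vector" and N :: "'n \<Rightarrow> 'n \<Rightarrow> 'n \<Rightarrow> 'v"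
    and H :: "'n \<Rightarrow> 'n \<Rightarrow> 'n \<Rightarrow> real"
  assumes H: "\<And>a b c. H a b c = - H b a c" "\<And>a b c. H a b c = - H a c b"
    and F: "J_invariant J F" and F_anti: "\<And>a b. F a b = - F b a"
    and N: "\<And>k. J_invariant J (N k)" and N_anti: "\<And>k a b. N k a b = - N k b a"
    and trace: "\<And>i. (\<Sum>j\<in>UNIV. \<Sum>k\<in>UNIV. omega j k *\<^sub>R N i j k) = 0"
    and cyclic: "\<And>k i j. N k i j + N i j k + N j k i = - (\<Sum>l\<in>UNIV. raise_index gi H l k i *\<^sub>R F l j
                   + raise_index gi H l j k *\<^sub>R F l i + raise_index gi H l i j *\<^sub>R F l k)"
  shows "(\<Sum>i\<in>UNIV. \<Sum>k\<in>UNIV. gi i k *\<^sub>R N k i j)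
       = (\<Sum>i\<in>UNIV. \<Sum>k\<in>UNIV. (gi i k * (1/2 * (\<Sum>a\<in>UNIV. \<Sum>b\<in>UNIV. \<Sum>c\<in>UNIV. J a k * H a b c * omega b c))) *\<^sub>R F i j)"
proof -
  define V where "V c = (\<Sum>j\<in>UNIV. \<Sum>a\<in>UNIV. gi j a *\<^sub>R N j a c)" for c
  define w where "w m = (\<Sum>b\<in>UNIV. \<Sum>c\<in>UNIV. omega b c * H m b c)" for m
  have "2 *\<^sub>R (\<Sum>c\<in>UNIV. J c i *\<^sub>R V c) = - (\<Sum>l\<in>UNIV. (\<Sum>m\<in>UNIV. gi l m * w m) *\<^sub>R F l i)" for i
    using omega_contract_cyclic[OF H F F_anti N N_anti trace cyclic, of i]
    unfolding V_def w_def omega_raise_index .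
  then have JV: "(\<Sum>c\<in>UNIV. J c i *\<^sub>R V c) = - ((1/2) *\<^sub>R (\<Sum>l\<in>UNIV. (\<Sum>m\<in>UNIV. gi l m * w m) *\<^sub>R F l i))" for i
    by (metis (no_types, lifting) scaleR_half_double scaleR_minus_right scaleR_2)
  have "(\<Sum>i\<in>UNIV. \<Sum>k\<in>UNIV. gi i k *\<^sub>R N k i j) = V j"
    unfolding V_def by (subst sum.swap) (simp add: gi_sym)
  also have "\<dots> = - (\<Sum>i\<in>UNIV. J i j *\<^sub>R (\<Sum>c\<in>UNIV. J c i *\<^sub>R V c))"
    by (simp add: J_J_contract)
  also have "\<dots> = (1/2) *\<^sub>R (\<Sum>i\<in>UNIV. J i j *\<^sub>R (\<Sum>l\<in>UNIV. (\<Sum>m\<in>UNIV. gi l m * w m) *\<^sub>R F l i))"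
    by (simp add: JV scaleR_sum_right sum_negf)
  also have "\<dots> = (1/2) *\<^sub>R (\<Sum>m\<in>UNIV. w m *\<^sub>R (\<Sum>i\<in>UNIV. omega m i *\<^sub>R F i j))"
    by (simp only: J_contract_raised[OF F F_anti])
  finally show ?thesis
    unfolding Lee_contraction w_def .
qed

end

section \<open>Partial derivatives\<close>

lemma pd_has_derivative: "(f has_derivative f') (at x) \<Longrightarrow> pd f i x = f' (axis i 1)"
  unfolding pd_def using frechet_derivative_at by metis

lemma pd_cong:
  assumes "open U" "x \<in> U" "\<And>y. y \<in> U \<Longrightarrow> f y = g y"
  shows "pd f i x = pd g i x"
proof -
  have "(f has_derivative f') (at x) \<longleftrightarrow> (g has_derivative f') (at x)" for f'
    using has_derivative_transform_within_open[OF _ assms(1,2)] assms(3) by metis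
  then show ?thesis unfolding pd_def frechet_derivative_def by simp
qed

lemma differentiable_cong_open:
  assumes "open U" "x \<in> U" "\<And>y. y \<in> U \<Longrightarrow> f y = g y" "f differentiable (at x)"
  shows "g differentiable (at x)"
  using assms has_derivative_transform_within_open unfolding differentiable_def by blast

lemma smooth_fn_pd: "smooth_fn U f \<Longrightarrow> smooth_fn U (pd f i)"
  unfolding smooth_fn_def by (metis Ck.simps(2))

lemma smooth_fn_differentiable: "open U \<Longrightarrow> x \<in> U \<Longrightarrow> smooth_fn U f \<Longrightarrow> f differentiable (at x)"
  unfolding smooth_fn_def by (metis Ck.simps(2) differentiable_on_eq_differentiable_at)

lemma smooth_fn_continuous_on: "smooth_fn U f \<Longrightarrow> continuous_on U f"
  unfolding smooth_fn_def by (metis Ck.simps(1))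

lemma pd_bounded_linear:
  assumes "bounded_linear L" "f differentiable (at x)"
  shows "pd (\<lambda>y. L (f y)) i x = L (pd f i x)"
  using pd_has_derivative[OF bounded_linear.has_derivative[OF assms(1) frechet_derivative_works[THEN iffD1, OF assms(2)]]]
  by (simp add: pd_def)

lemma pd_bounded_bilinear:
  assumes "bounded_bilinear b" "f differentiable (at x)" "g differentiable (at x)"
  shows "pd (\<lambda>y. b (f y) (g y)) i x = b (f x) (pd g i x) + b (pd f i x) (g x)"
proof -
  have "((\<lambda>y. b (f y) (g y)) has_derivative
      (\<lambda>h. b (f x) (frechet_derivative g (at x) h) + b (frechet_derivative f (at x) h) (g x))) (at x)"
    using bounded_bilinear.FDERIV[OF assms(1) frechet_derivative_works[THEN iffD1, OF assms(2)]
        frechet_derivative_works[THEN iffD1, OF assms(3)]] .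
  from pd_has_derivative[OF this] show ?thesis by (simp add: pd_def)
qed

lemma differentiable_bounded_bilinear:
  assumes "bounded_bilinear b" "f differentiable (at x)" "g differentiable (at x)"
  shows "(\<lambda>y. b (f y) (g y)) differentiable (at x)"
  using bounded_bilinear.FDERIV[OF assms(1) frechet_derivative_works[THEN iffD1, OF assms(2)]
      frechet_derivative_works[THEN iffD1, OF assms(3)]]
  unfolding differentiable_def by blast

lemma pd_add:
  "f differentiable (at x) \<Longrightarrow> g differentiable (at x) \<Longrightarrow> pd (\<lambda>y. f y + g y) i x = pd f i x + pd g i x"
  using pd_has_derivative[OF has_derivative_add[OF frechet_derivative_works[THEN iffD1]
      frechet_derivative_works[THEN iffD1]]] by (simp add: pd_def)

lemma pd_diff:
  "f differentiable (at x) \<Longrightarrow> g differentiable (at x) \<Longrightarrow> pd (\<lambda>y. f y - g y) i x = pd f i x - pd g i x"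
  using pd_has_derivative[OF has_derivative_diff[OF frechet_derivative_works[THEN iffD1]
      frechet_derivative_works[THEN iffD1]]] by (simp add: pd_def)

lemma pd_sum:
  assumes "\<And>a. a \<in> I \<Longrightarrow> f a differentiable (at x)"
  shows "pd (\<lambda>y. \<Sum>a\<in>I. f a y) i x = (\<Sum>a\<in>I. pd (f a) i x)"
  using pd_has_derivative[OF has_derivative_sum[of I f, OF frechet_derivative_works[THEN iffD1, OF assms]]]
  by (simp add: pd_def)

lemma pd_const: "pd (\<lambda>y. c) i x = 0"
  unfolding pd_def by simp

lemma pd_minus: "f differentiable (at x) \<Longrightarrow> pd (\<lambda>y. - f y) i x = - pd f i x"
  using pd_diff[OF differentiable_const, of f x 0 i] by (simp add: pd_const)

lemma pd_scaleR:
  "f differentiable (at x) \<Longrightarrow> g differentiable (at x) \<Longrightarrow> pd (\<lambda>y. f y *\<^sub>R g y) i x = f x *\<^sub>R pd g i x + pd f i x *\<^sub>R g x"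
  by (rule pd_bounded_bilinear[OF bounded_bilinear_scaleR])

lemma pd_mult:
  fixes f g :: "real^'n \<Rightarrow> real"
  shows "f differentiable (at x) \<Longrightarrow> g differentiable (at x) \<Longrightarrow> pd (\<lambda>y. f y * g y) i x = f x * pd g i x + pd f i x * g x"
  by (rule pd_bounded_bilinear[OF bounded_bilinear_mult])

lemma pd_exp:
  fixes f :: "real^'n \<Rightarrow> real"
  assumes "f differentiable (at x)"
  shows "pd (\<lambda>y. exp (f y)) i x = exp (f x) * pd f i x"
  using pd_has_derivative[OF has_derivative_exp[OF frechet_derivative_works[THEN iffD1, OF assms]]]
  by (simp add: pd_def mult.commute)

lemma bounded_bilinear_matrix_mult: "bounded_bilinear (\<lambda>(A::'a::{real_normed_algebra_1,euclidean_space}^'n^'m) (B::'a^'p^'n). A ** B)"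
proof -
  have "linear (\<lambda>B. A ** B)" for A :: "'a^'n^'m"
    by (rule linearI) (simp_all add: matrix_add_ldistrib matrix_scalar_ac scalar_matrix_assoc)
  moreover have "linear (\<lambda>A. A ** B)" for B :: "'a^'p^'n"
    by (rule linearI) (simp_all add: matrix_add_rdistrib scalar_matrix_assoc)
  ultimately have "bilinear (\<lambda>(A::'a^'n^'m) (B::'a^'p^'n). A ** B)"
    unfolding bilinear_def by (intro conjI allI)
  then show ?thesis
    by (simp add: bilinear_conv_bounded_bilinear)
qed

lemma pd_matrix_mult:
  fixes f g :: "real^'n \<Rightarrow> 'a::{real_normed_algebra_1,euclidean_space}^'r^'r"
  shows "f differentiable (at x) \<Longrightarrow> g differentiable (at x) \<Longrightarrow> pd (\<lambda>y. f y ** g y) i x = f x ** pd g i x + pd f i x ** g x"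
  by (rule pd_bounded_bilinear[OF bounded_bilinear_matrix_mult])

lemma differentiable_matrix_mult:
  fixes f g :: "real^'n \<Rightarrow> 'a::{real_normed_algebra_1,euclidean_space}^'r^'r"
  shows "f differentiable (at x) \<Longrightarrow> g differentiable (at x) \<Longrightarrow> (\<lambda>y. f y ** g y) differentiable (at x)"
  by (rule differentiable_bounded_bilinear[OF bounded_bilinear_matrix_mult])

lemma has_derivative_along_line:
  fixes f :: "real^'n \<Rightarrow> 'b::real_normed_vector"
  assumes "f differentiable (at (q + s0 *\<^sub>R v))"
  shows "((\<lambda>s. f (q + s *\<^sub>R v)) has_derivative (\<lambda>h. h *\<^sub>R frechet_derivative f (at (q + s0 *\<^sub>R v)) v)) (at s0 within S)"
proof -
  let ?D = "frechet_derivative f (at (q + s0 *\<^sub>R v))"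
  have line: "((\<lambda>s. q + s *\<^sub>R v) has_derivative (\<lambda>h. h *\<^sub>R v)) (at s0 within S)"
    by (auto intro!: derivative_eq_intros)
  have "(f has_derivative ?D) (at (q + s0 *\<^sub>R v) within (\<lambda>s. q + s *\<^sub>R v) ` S)"
    using assms frechet_derivative_works has_derivative_at_withinI by blast
  from diff_chain_within[OF line this] show ?thesis
    using linear_frechet_derivative[OF assms] by (simp add: o_def linear_scale)
qed

lemma dist_two_axes_le:
  fixes x :: "real^'n"
  assumes "0 \<le> s" "0 \<le> u"
  shows "dist x (x + s *\<^sub>R axis i 1 + u *\<^sub>R axis k (1::real)) \<le> s + u"
proof -
  have "norm (s *\<^sub>R axis i 1 + u *\<^sub>R axis k (1::real)) \<le> norm (s *\<^sub>R axis i (1::real)) + norm (u *\<^sub>R axis k (1::real))"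
    by (rule norm_triangle_ineq)
  moreover have "dist x (x + w) = norm w" for w
    by (metis add_diff_cancel_left' dist_commute dist_norm)
  ultimately show ?thesis using assms by (simp add: add.assoc)
qed

lemma second_difference_mvt:
  fixes f :: "real^'n \<Rightarrow> real"
  assumes df: "\<And>y. y \<in> ball x r \<Longrightarrow> f differentiable (at y)"
    and dg: "\<And>y. y \<in> ball x r \<Longrightarrow> pd f i differentiable (at y)"
    and t: "0 < t" "2 * t < r"
  shows "\<exists>\<xi>. dist x \<xi> \<le> 2 * t \<and>
    f (x + t *\<^sub>R axis i 1 + t *\<^sub>R axis k 1) - f (x + t *\<^sub>R axis i 1) - f (x + t *\<^sub>R axis k 1) + f x
      = t * t * pd (pd f i) k \<xi>"
proof -
  let ?ei = "axis i 1 :: real^'n" and ?ek = "axis k 1 :: real^'n"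
  have inball: "x + s *\<^sub>R ?ei + u *\<^sub>R ?ek \<in> ball x r" if "0 \<le> s" "s \<le> t" "0 \<le> u" "u \<le> t" for s u
    using dist_two_axes_le[of s u x i k] that t by simp
  define \<phi> where "\<phi> s = f (x + s *\<^sub>R ?ei + t *\<^sub>R ?ek) - f (x + s *\<^sub>R ?ei)" for s
  have "\<exists>\<sigma>\<in>{0<..<t}. \<phi> t - \<phi> 0 = (\<lambda>h. h * (pd f i (x + \<sigma> *\<^sub>R ?ei + t *\<^sub>R ?ek) - pd f i (x + \<sigma> *\<^sub>R ?ei))) (t - 0)"
  proof (rule mvt_simple[OF t(1)])
    fix s assume s: "0 \<le> s" "s \<le> t"
    have "((\<lambda>s. f ((x + t *\<^sub>R ?ek) + s *\<^sub>R ?ei)) has_derivative (\<lambda>h. h *\<^sub>R pd f i (x + s *\<^sub>R ?ei + t *\<^sub>R ?ek))) (at s within {0..t})"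
      using has_derivative_along_line[of f "x + t *\<^sub>R ?ek" s ?ei] df[OF inball[OF s, of t]] t
      by (simp add: pd_def algebra_simps)
    moreover have "((\<lambda>s. f (x + s *\<^sub>R ?ei)) has_derivative (\<lambda>h. h *\<^sub>R pd f i (x + s *\<^sub>R ?ei))) (at s within {0..t})"
      using has_derivative_along_line[of f x s ?ei] df[OF inball[OF s, of 0]] t
      by (simp add: pd_def)
    ultimately show "(\<phi> has_derivative (\<lambda>h. h * (pd f i (x + s *\<^sub>R ?ei + t *\<^sub>R ?ek) - pd f i (x + s *\<^sub>R ?ei)))) (at s within {0..t})"
      unfolding \<phi>_def by (auto dest: has_derivative_diff simp: algebra_simps)
  qed
  then obtain \<sigma> where \<sigma>: "0 < \<sigma>" "\<sigma> < t"
    and e\<sigma>: "\<phi> t - \<phi> 0 = t * (pd f i (x + \<sigma> *\<^sub>R ?ei + t *\<^sub>R ?ek) - pd f i (x + \<sigma> *\<^sub>R ?ei))" by auto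
  define \<psi> where "\<psi> u = pd f i (x + \<sigma> *\<^sub>R ?ei + u *\<^sub>R ?ek)" for u
  have "\<exists>\<tau>\<in>{0<..<t}. \<psi> t - \<psi> 0 = (\<lambda>h. h * pd (pd f i) k (x + \<sigma> *\<^sub>R ?ei + \<tau> *\<^sub>R ?ek)) (t - 0)"
  proof (rule mvt_simple[OF t(1)])
    fix u assume u: "0 \<le> u" "u \<le> t"
    show "(\<psi> has_derivative (\<lambda>h. h * pd (pd f i) k (x + \<sigma> *\<^sub>R ?ei + u *\<^sub>R ?ek))) (at u within {0..t})"
      unfolding \<psi>_def using has_derivative_along_line[of "pd f i" "x + \<sigma> *\<^sub>R ?ei" u ?ek] dg[OF inball[of \<sigma> u]] \<sigma> u
      by (simp add: pd_def)
  qed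
  then obtain \<tau> where \<tau>: "0 < \<tau>" "\<tau> < t"
    and e\<tau>: "\<psi> t - \<psi> 0 = t * pd (pd f i) k (x + \<sigma> *\<^sub>R ?ei + \<tau> *\<^sub>R ?ek)" by auto
  have "dist x (x + \<sigma> *\<^sub>R ?ei + \<tau> *\<^sub>R ?ek) \<le> 2 * t"
    using dist_two_axes_le[of \<sigma> \<tau> x i k] \<sigma> \<tau> by simp
  moreover have "f (x + t *\<^sub>R ?ei + t *\<^sub>R ?ek) - f (x + t *\<^sub>R ?ei) - f (x + t *\<^sub>R ?ek) + f x
      = t * t * pd (pd f i) k (x + \<sigma> *\<^sub>R ?ei + \<tau> *\<^sub>R ?ek)"
    using e\<sigma> e\<tau> unfolding \<phi>_def \<psi>_def by (simp add: algebra_simps)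
  ultimately show ?thesis by blast
qed

(* Both mixed partials are limits of the same second difference quotient. *)
lemma pd_pd_commute_real:
  fixes f :: "real^'n \<Rightarrow> real"
  assumes U: "open U" "x \<in> U"
    and df: "\<And>y. y \<in> U \<Longrightarrow> f differentiable (at y)"
    and dfi: "\<And>y. y \<in> U \<Longrightarrow> pd f i differentiable (at y)"
    and dfk: "\<And>y. y \<in> U \<Longrightarrow> pd f k differentiable (at y)"
    and cik: "continuous_on U (pd (pd f i) k)" and cki: "continuous_on U (pd (pd f k) i)"
  shows "pd (pd f i) k x = pd (pd f k) i x"
proof (rule ccontr)
  let ?a = "pd (pd f i) k x" and ?b = "pd (pd f k) i x"
  assume ne: "?a \<noteq> ?b"
  define e where "e = \<bar>?a - ?b\<bar> / 2"
  have e: "e > 0" using ne by (simp add: e_def)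
  obtain r where r: "r > 0" "ball x r \<subseteq> U" using U open_contains_ball by blast
  have "isCont (pd (pd f i) k) x" "isCont (pd (pd f k) i) x"
    using cik cki U continuous_on_eq_continuous_at by blast+
  then obtain d1 d2 where d1: "d1 > 0" "\<And>y. dist y x < d1 \<Longrightarrow> dist (pd (pd f i) k y) ?a < e"
    and d2: "d2 > 0" "\<And>y. dist y x < d2 \<Longrightarrow> dist (pd (pd f k) i y) ?b < e"
    using e unfolding continuous_at_eps_delta by blast
  define t where "t = min r (min d1 d2) / 4"
  have t: "0 < t" "2 * t < r" "2 * t < d1" "2 * t < d2" using r d1 d2 by (auto simp: t_def)
  obtain \<xi> where \<xi>: "dist x \<xi> \<le> 2 * t"
    "f (x + t *\<^sub>R axis i 1 + t *\<^sub>R axis k 1) - f (x + t *\<^sub>R axis i 1) - f (x + t *\<^sub>R axis k 1) + f x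
      = t * t * pd (pd f i) k \<xi>"
    using second_difference_mvt[of x r f i t k] df dfi r t by blast
  obtain \<eta> where \<eta>: "dist x \<eta> \<le> 2 * t"
    "f (x + t *\<^sub>R axis k 1 + t *\<^sub>R axis i 1) - f (x + t *\<^sub>R axis k 1) - f (x + t *\<^sub>R axis i 1) + f x
      = t * t * pd (pd f k) i \<eta>"
    using second_difference_mvt[of x r f k t i] df dfk r t by blast
  have "t * t * pd (pd f i) k \<xi> = t * t * pd (pd f k) i \<eta>"
    using \<xi>(2) \<eta>(2) by (simp add: algebra_simps)
  then have "pd (pd f i) k \<xi> = pd (pd f k) i \<eta>" using t by simp
  moreover have "dist (pd (pd f i) k \<xi>) ?a < e" "dist (pd (pd f k) i \<eta>) ?b < e"
    using d1(2)[of \<xi>] d2(2)[of \<eta>] \<xi>(1) \<eta>(1) t by (simp_all add: dist_commute)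
  ultimately have "\<bar>?a - ?b\<bar> < 2 * e" by (simp add: dist_real_def)
  then show False by (simp add: e_def)
qed

lemma pd_pd_commute:
  fixes f :: "real^'n \<Rightarrow> 'b::euclidean_space"
  assumes U: "open U" "x \<in> U" and f: "smooth_fn U f"
  shows "pd (pd f i) k x = pd (pd f k) i x"
proof (rule euclidean_eqI)
  fix b :: 'b
  define g where "g y = inner (f y) b" for y
  have bl: "bounded_linear (\<lambda>v::'b. inner v b)" by (rule bounded_linear_inner_left)
  have f1: "smooth_fn U (pd f j)" and f2: "smooth_fn U (pd (pd f j) l)" for j l
    using f smooth_fn_pd by blast+
  have pg: "pd g j y = inner (pd f j y) b" if "y \<in> U" for j y
    unfolding g_def using pd_bounded_linear[OF bl] smooth_fn_differentiable[OF U(1) that f] by blast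
  have pgg: "pd (pd g j) l y = inner (pd (pd f j) l y) b" if "y \<in> U" for j l y
    using pd_cong[OF U(1) that, of "pd g j"] pg pd_bounded_linear[OF bl smooth_fn_differentiable[OF U(1) that f1]]
    by metis
  have dg: "(\<lambda>y. inner (h y) b) differentiable (at y)" if "h differentiable (at y)" for h :: "real^'n \<Rightarrow> 'b" and y
    using bounded_linear.has_derivative[OF bl] that unfolding differentiable_def by blast
  have "g differentiable (at y)" if "y \<in> U" for y
    unfolding g_def by (rule dg[OF smooth_fn_differentiable[OF U(1) that f]])
  moreover have "pd g j differentiable (at y)" if "y \<in> U" for j y
    by (rule differentiable_cong_open[OF U(1) that _ dg[OF smooth_fn_differentiable[OF U(1) that f1]]])
      (simp add: pg)
  moreover have "continuous_on U (pd (pd g j) l)" for j l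
    using continuous_on_cong[of U U "pd (pd g j) l"] pgg
      continuous_on_inner[OF smooth_fn_continuous_on[OF f2] continuous_on_const] by metis
  ultimately have "pd (pd g i) k x = pd (pd g k) i x"
    by (intro pd_pd_commute_real[OF U])
  then show "inner (pd (pd f i) k x) b = inner (pd (pd f k) i x) b"
    using pgg[OF U(2)] by metis
qed

section \<open>The inverse metric\<close>

lemma riem_metric_invertible:
  fixes G :: "real^'n \<Rightarrow> 'n \<Rightarrow> 'n \<Rightarrow> real"
  assumes "riem_metric U G" "y \<in> U"
  shows "invertible (\<chi> a b. G y a b)"
proof -
  have "v = 0" if "(\<chi> a b. G y a b) *v v = 0" for v :: "real^'n"
  proof (rule ccontr)
    assume "v \<noteq> 0"
    then have pos: "(\<Sum>i\<in>UNIV. \<Sum>j\<in>UNIV. G y i j * v$i * v$j) > 0"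
      using assms unfolding riem_metric_def by blast
    have "(\<Sum>j\<in>UNIV. G y i j * v$j) = 0" for i
      using that by (simp add: matrix_vector_mult_def vec_eq_iff)
    then have "(\<Sum>i\<in>UNIV. \<Sum>j\<in>UNIV. G y i j * v$i * v$j) = 0"
      by (simp add: sum_distrib_left[symmetric] mult.commute mult.left_commute)
    with pos show False by simp
  qed
  then show ?thesis
    using matrix_left_invertible_ker invertible_left_inverse by blast
qed

lemma matrix_inv_inverse:
  assumes "invertible (A::'a::semiring_1^'n^'n)"
  shows "A ** matrix_inv A = mat 1" "matrix_inv A ** A = mat 1"
proof -
  have "\<exists>A'. A ** A' = mat 1 \<and> A' ** A = mat 1" using assms invertible_def by blast
  then have "A ** matrix_inv A = mat 1 \<and> matrix_inv A ** A = mat 1"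
    unfolding matrix_inv_def by (rule someI_ex)
  then show "A ** matrix_inv A = mat 1" "matrix_inv A ** A = mat 1" by auto
qed

lemma metric_point_Ginv:
  assumes "riem_metric U G" "y \<in> U"
  shows "metric_point (G y) (Ginv G y)"
proof
  note inv = matrix_inv_inverse[OF riem_metric_invertible[OF assms]]
  show "(\<Sum>b\<in>UNIV. G y a b * Ginv G y b c) = (if a = c then 1 else 0)" for a c
    using inv(1) by (simp add: Ginv_def matrix_matrix_mult_def vec_eq_iff mat_def)
  show "(\<Sum>b\<in>UNIV. Ginv G y a b * G y b c) = (if a = c then 1 else 0)" for a c
    using inv(2) by (simp add: Ginv_def matrix_matrix_mult_def vec_eq_iff mat_def)
  show "G y a b = G y b a" for a b
    using assms unfolding riem_metric_def by blast
qed

lemma hermitian_point_at: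
  assumes "hermitian U G J" "y \<in> U"
  shows "hermitian_point (G y) (Ginv G y) (J y)"
proof -
  interpret metric_point "G y" "Ginv G y"
    using assms metric_point_Ginv unfolding hermitian_def by blast
  have "(\<Sum>l\<in>UNIV. J y k l * J y l j) = (if k = j then -1 else 0)"
    and "(\<Sum>k\<in>UNIV. \<Sum>l\<in>UNIV. J y k i * J y l j * G y k l) = G y i j" for i j k
    using assms unfolding hermitian_def by blast+
  then show ?thesis by unfold_locales
qed

lemma matrix_inv_cramer:
  fixes A :: "real^'n^'n"
  assumes "invertible A"
  shows "matrix_inv A $ b $ c = det (\<chi> i j. if j = b then axis c 1 $ i else A $ i $ j) / det A"
proof -
  have "A *v (matrix_inv A *v axis c 1) = axis c 1"
    using matrix_inv_inverse(1)[OF assms] by (simp add: matrix_vector_mul_assoc)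
  then have "matrix_inv A *v axis c 1 = (\<chi> k. det (\<chi> i j. if j = k then axis c 1 $ i else A $ i $ j) / det A)"
    using cramer[OF assms[unfolded invertible_det_nz]] by blast
  moreover have "(matrix_inv A *v axis c 1) $ b = matrix_inv A $ b $ c"
  proof -
    have "matrix_inv A $ b $ j * (if j = c then 1 else 0) = (if j = c then matrix_inv A $ b $ c else 0)" for j
      by simp
    then show ?thesis by (simp add: matrix_vector_mult_def axis_def)
  qed
  ultimately show ?thesis by simp
qed

lemma differentiable_prod:
  fixes f :: "'i \<Rightarrow> 'a::real_normed_vector \<Rightarrow> real"
  assumes "finite I" "\<And>i. i \<in> I \<Longrightarrow> f i differentiable (at x)"
  shows "(\<lambda>x. \<Prod>i\<in>I. f i x) differentiable (at x)"
  using assms by (induction I rule: finite_induct) (auto intro!: differentiable_mult)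

lemma differentiable_det:
  fixes M :: "'a::real_normed_vector \<Rightarrow> real^'n^'n"
  assumes "\<And>i j. (\<lambda>x. M x $ i $ j) differentiable (at x)"
  shows "(\<lambda>x. det (M x)) differentiable (at x)"
  unfolding det_def by (auto intro!: differentiable_sum differentiable_mult differentiable_prod assms)

lemma Ginv_differentiable:
  assumes U: "open U" "x \<in> U" and G: "riem_metric U G"
  shows "(\<lambda>y. Ginv G y b c) differentiable (at x)"
proof -
  have dG: "(\<lambda>y. G y i j) differentiable (at x)" for i j
    using smooth_fn_differentiable[OF U] G unfolding riem_metric_def by blast
  have eq: "det (\<chi> i j. if j = b then axis c 1 $ i else G y i j) / det (\<chi> a b. G y a b) = Ginv G y b c"
    if "y \<in> U" for y
  proof -
    have "(\<chi> i j. if j = b then axis c 1 $ i else (\<chi> a b. G y a b) $ i $ j)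
        = (\<chi> i j. if j = b then axis c 1 $ i else G y i j)"
      by (simp add: vec_eq_iff)
    then show ?thesis
      unfolding Ginv_def matrix_inv_cramer[OF riem_metric_invertible[OF G that]] by simp
  qed
  have "det (\<chi> a b. G x a b) \<noteq> 0"
    using riem_metric_invertible[OF G U(2)] invertible_det_nz by blast
  then have d: "(\<lambda>y. det (\<chi> i j. if j = b then axis c 1 $ i else G y i j) / det (\<chi> a b. G y a b)) differentiable (at x)"
  proof (intro differentiable_divide differentiable_det)
    show "(\<lambda>y. (\<chi> i j. if j = b then axis c 1 $ i else G y i j) $ i $ j) differentiable (at x)" for i j
      by (cases "j = b") (auto simp: dG)
  qed (auto simp: dG)
  show ?thesis
    by (rule differentiable_cong_open[OF U eq d])
qed

section \<open>Covariant derivatives of the curvature\<close>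

lemma type11_iff_J_invariant: "type11 J F x \<longleftrightarrow> J_invariant (J x) (F x)"
  by (simp add: type11_def J_invariant_def)

lemma Dplus_eq_cov_deriv:
  "Dplus G H A T x = cov_deriv (Gplus G H x) (\<lambda>k v. A x k ** v - v ** A x k) (\<lambda>k i j. pd (\<lambda>y. T y i j) k x) (T x)"
  by (simp add: fun_eq_iff Dplus_def cov_deriv_def)

lemma Hup_eq_raise_index: "Hup G H x = raise_index (Ginv G x) (H x)"
  by (simp add: fun_eq_iff Hup_def raise_index_def)

lemma three_form_antisym:
  assumes "three_form U H" "x \<in> U"
  shows "H x a b c = - H x b a c" "H x a b c = - H x a c b"
  using assms unfolding three_form_def by blast+

lemma pd_metric_sym:
  assumes "open U" "x \<in> U" "riem_metric U G"
  shows "pd (\<lambda>y. G y a b) c x = pd (\<lambda>y. G y b a) c x"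
  using assms by (intro pd_cong) (auto simp: riem_metric_def)

lemma Gplus_metric_compatible:
  assumes U: "open U" "x \<in> U" and G: "riem_metric U G" and H: "three_form U H"
  shows "pd (\<lambda>y. G y a b) i x = (\<Sum>l\<in>UNIV. Gplus G H x i l a * G x l b) + (\<Sum>l\<in>UNIV. Gplus G H x i l b * G x a l)"
proof -
  interpret metric_point "G x" "Ginv G x"
    using metric_point_Ginv[OF G U(2)] .
  show ?thesis
  proof (rule metric_compatible[where dg = "\<lambda>c a b. pd (\<lambda>y. G y a b) c x" and H = "H x"])
    show "pd (\<lambda>y. G y a b) c x = pd (\<lambda>y. G y b a) c x" for c a b
      by (rule pd_metric_sym[OF U G])
    show "H x a b c = - H x b a c" "H x a b c = - H x a c b" for a b c
      by (rule three_form_antisym[OF H U(2)])+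
  qed (simp add: Gplus_def LC_def Hup_def)
qed

lemma pd_Ginv:
  assumes U: "open U" "x \<in> U" and G: "riem_metric U G" and H: "three_form U H"
  shows "pd (\<lambda>y. Ginv G y k c) i x
       = - (\<Sum>l\<in>UNIV. Gplus G H x i k l * Ginv G x l c) - (\<Sum>l\<in>UNIV. Gplus G H x i c l * Ginv G x k l)"
proof -
  interpret metric_point "G x" "Ginv G x"
    using metric_point_Ginv[OF G U(2)] .
  have dG: "(\<lambda>y. G y a b) differentiable (at x)" for a b
    using smooth_fn_differentiable[OF U] G unfolding riem_metric_def by blast
  have dGi: "(\<lambda>y. Ginv G y a b) differentiable (at x)" for a b
    by (rule Ginv_differentiable[OF U G])
  have "(\<Sum>b\<in>UNIV. pd (\<lambda>y. G y a b) i x * Ginv G x b c) + (\<Sum>b\<in>UNIV. G x a b * pd (\<lambda>y. Ginv G y b c) i x) = 0"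
    for a c
  proof -
    have "pd (\<lambda>y. \<Sum>b\<in>UNIV. G y a b * Ginv G y b c) i x = pd (\<lambda>y. if a = c then 1 else (0::real)) i x"
      by (rule pd_cong[OF U]) (simp add: metric_point.g_gi[OF metric_point_Ginv[OF G]])
    then show ?thesis
      by (simp add: pd_sum pd_mult dG dGi pd_const sum.distrib algebra_simps)
  qed
  then show ?thesis
    by (rule inverse_metric_derivative) (rule Gplus_metric_compatible[OF U G H])
qed

lemma pd_J:
  assumes "KT U G J H" "x \<in> U"
  shows "pd (\<lambda>y. J y k j) i x = - (\<Sum>l\<in>UNIV. Gplus G H x i k l * J x l j) + (\<Sum>l\<in>UNIV. Gplus G H x i l j * J x k l)"
proof -
  have "pd (\<lambda>y. J y k j) i x + (\<Sum>l\<in>UNIV. Gplus G H x i k l * J x l j) - (\<Sum>l\<in>UNIV. Gplus G H x i l j * J x k l) = 0"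
    using assms unfolding KT_def by blast
  then show ?thesis by linarith
qed

lemma KT_D:
  assumes "KT U G J H"
  shows "hermitian U G J" "riem_metric U G" "three_form U H" "smooth_fn U (\<lambda>x. J x k j)"
  using assms unfolding KT_def hermitian_def by blast+

lemma pd_omega_up:
  assumes U: "open U" "x \<in> U" and KT: "KT U G J H"
  shows "pd (\<lambda>y. omega_up (Ginv G y) (J y) j k) i x
       = - (\<Sum>l\<in>UNIV. Gplus G H x i j l * omega_up (Ginv G x) (J x) l k)
         - (\<Sum>l\<in>UNIV. Gplus G H x i k l * omega_up (Ginv G x) (J x) j l)"
proof -
  have dJ: "(\<lambda>y. J y a b) differentiable (at x)" for a b
    using smooth_fn_differentiable[OF U KT_D(4)[OF KT]] .
  have dGi: "(\<lambda>y. Ginv G y a b) differentiable (at x)" for a b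
    using Ginv_differentiable[OF U KT_D(2)[OF KT]] .
  have "pd (\<lambda>y. omega_up (Ginv G y) (J y) j k) i x
      = (\<Sum>b\<in>UNIV. pd (\<lambda>y. J y j b) i x * Ginv G x b k + J x j b * pd (\<lambda>y. Ginv G y b k) i x)"
    unfolding omega_up_def by (simp add: pd_sum pd_mult dJ dGi algebra_simps)
  also have "\<dots> = - (\<Sum>l\<in>UNIV. Gplus G H x i j l * omega_up (Ginv G x) (J x) l k)
         - (\<Sum>l\<in>UNIV. Gplus G H x i k l * omega_up (Ginv G x) (J x) j l)"
    by (rule derivative_parallel_product[where dJ = "\<lambda>j b. pd (\<lambda>y. J y j b) i x"
          and dgi = "\<lambda>b k. pd (\<lambda>y. Ginv G y b k) i x"])
      (simp_all add: pd_J[OF KT U(2)] pd_Ginv[OF U KT_D(2,3)[OF KT]])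
  finally show ?thesis .
qed

lemma Omup_eq_omega_up:
  assumes "riem_metric U G" "y \<in> U"
  shows "Omup G J y = omega_up (Ginv G y) (J y)"
proof -
  interpret metric_point "G y" "Ginv G y"
    using metric_point_Ginv[OF assms] .
  have "Omup G J y k l = omega_up (Ginv G y) (J y) k l" for k l
  proof -
    have "Omup G J y k l
        = (\<Sum>a\<in>UNIV. \<Sum>b\<in>UNIV. \<Sum>c\<in>UNIV. (Ginv G y k a * G y a c) * (Ginv G y l b * J y c b))"
      by (simp add: Omup_def Om_def sum_distrib_left mult_ac)
    also have "\<dots> = (\<Sum>b\<in>UNIV. \<Sum>c\<in>UNIV. (\<Sum>a\<in>UNIV. Ginv G y k a * G y a c) * (Ginv G y l b * J y c b))"
      by (subst sum_rotate3) (simp add: sum_distrib_right)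
    also have "\<dots> = omega_up (Ginv G y) (J y) k l"
      by (simp only: gi_g) (simp add: omega_up_def gi_sym if_distrib if_distribR mult.commute cong: if_cong)
    finally show ?thesis .
  qed
  then show ?thesis by (simp add: fun_eq_iff)
qed

lemma curv_differentiable:
  assumes "open U" "x \<in> U" "\<forall>i. smooth_fn U (\<lambda>x. A x i)"
  shows "(\<lambda>y. curv A y i j) differentiable (at x)"
  unfolding curv_def using assms
  by (intro differentiable_add differentiable_diff differentiable_matrix_mult smooth_fn_differentiable[OF assms(1,2)]
      smooth_fn_pd) auto

lemma curv_antisym: "curv A y a b = - curv A y b a"
  by (simp add: curv_def algebra_simps)

lemma pd_curv_antisym:
  assumes "open U" "x \<in> U" "\<forall>i. smooth_fn U (\<lambda>x. A x i)"
  shows "pd (\<lambda>y. curv A y a b) k x = - pd (\<lambda>y. curv A y b a) k x"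
  using pd_minus[OF curv_differentiable[OF assms]] by (simp add: curv_antisym[of A _ a b])

lemma pd_curv_J_invariant:
  assumes U: "open U" "x \<in> U" and KT: "KT U G J H" and A: "\<forall>i. smooth_fn U (\<lambda>x. A x i)"
    and F: "\<forall>y\<in>U. type11 J (curv A) y"
  shows "pd (\<lambda>y. curv A y i j) k x
       = (\<Sum>a\<in>UNIV. \<Sum>b\<in>UNIV. (pd (\<lambda>y. J y a i) k x * J x b j + J x a i * pd (\<lambda>y. J y b j) k x) *\<^sub>R curv A x a b)
         + (\<Sum>a\<in>UNIV. \<Sum>b\<in>UNIV. (J x a i * J x b j) *\<^sub>R pd (\<lambda>y. curv A y a b) k x)"
proof -
  have dJ: "(\<lambda>y. J y a b) differentiable (at x)" for a b
    using smooth_fn_differentiable[OF U KT_D(4)[OF KT]] .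
  have dF: "(\<lambda>y. curv A y a b) differentiable (at x)" for a b
    by (rule curv_differentiable[OF U A])
  have dJJ: "(\<lambda>y. J y a i * J y b j) differentiable (at x)" for a b
    by (simp add: dJ)
  have "pd (\<lambda>y. curv A y i j) k x = pd (\<lambda>y. \<Sum>a\<in>UNIV. \<Sum>b\<in>UNIV. (J y a i * J y b j) *\<^sub>R curv A y a b) k x"
    using F by (intro pd_cong[OF U]) (simp add: type11_def)
  also have "\<dots> = (\<Sum>a\<in>UNIV. \<Sum>b\<in>UNIV. pd (\<lambda>y. (J y a i * J y b j) *\<^sub>R curv A y a b) k x)"
    by (subst pd_sum, simp add: dJ dF, rule sum.cong[OF refl], rule pd_sum, simp add: dJ dF)
  also have "\<dots> = (\<Sum>a\<in>UNIV. \<Sum>b\<in>UNIV. (J x a i * J x b j) *\<^sub>R pd (\<lambda>y. curv A y a b) k x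
      + (pd (\<lambda>y. J y a i) k x * J x b j + J x a i * pd (\<lambda>y. J y b j) k x) *\<^sub>R curv A x a b)"
    by (intro sum.cong refl) (simp add: pd_scaleR[OF dJJ dF] pd_mult[OF dJ dJ] algebra_simps)
  finally show ?thesis by (simp add: sum.distrib add.commute)
qed

lemma Dplus_curv_J_invariant:
  assumes U: "open U" "x \<in> U" and KT: "KT U G J H" and A: "\<forall>i. smooth_fn U (\<lambda>x. A x i)"
    and F: "\<forall>y\<in>U. type11 J (curv A) y"
  shows "J_invariant (J x) (Dplus G H A (curv A) x k)"
  unfolding Dplus_eq_cov_deriv
proof (rule cov_deriv_J_invariant[where dJ = "\<lambda>k a i. pd (\<lambda>y. J y a i) k x"])
  show "J_invariant (J x) (curv A x)"
    using F U(2) by (simp add: type11_iff_J_invariant)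
qed (rule pd_curv_J_invariant[OF U KT A F] pd_J[OF KT U(2)] linear_matrix_commutator)+

lemma Dplus_curv_antisym:
  assumes "open U" "x \<in> U" "\<forall>i. smooth_fn U (\<lambda>x. A x i)"
  shows "Dplus G H A (curv A) x k i j = - Dplus G H A (curv A) x k j i"
  unfolding Dplus_eq_cov_deriv
  by (rule cov_deriv_antisym[OF curv_antisym pd_curv_antisym[OF assms] linear_matrix_commutator])

lemma Dplus_curv_omega_trace:
  assumes U: "open U" "x \<in> U" and KT: "KT U G J H" and A: "\<forall>i. smooth_fn U (\<lambda>x. A x i)"
    and trace: "\<forall>y\<in>U. (\<Sum>i\<in>UNIV. \<Sum>j\<in>UNIV. Omup G J y i j *\<^sub>R curv A y i j) = 0"
  shows "(\<Sum>j\<in>UNIV. \<Sum>k\<in>UNIV. omega_up (Ginv G x) (J x) j k *\<^sub>R Dplus G H A (curv A) x i j k) = 0"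
proof -
  have tr: "(\<Sum>j\<in>UNIV. \<Sum>k\<in>UNIV. omega_up (Ginv G y) (J y) j k *\<^sub>R curv A y j k) = 0" if "y \<in> U" for y
    using trace[rule_format, OF that] by (simp add: Omup_eq_omega_up[OF KT_D(2)[OF KT] that])
  have dJ: "(\<lambda>y. J y a b) differentiable (at x)" for a b
    using smooth_fn_differentiable[OF U KT_D(4)[OF KT]] .
  have dOm: "(\<lambda>y. omega_up (Ginv G y) (J y) a b) differentiable (at x)" for a b
    unfolding omega_up_def by (simp add: dJ Ginv_differentiable[OF U KT_D(2)[OF KT]])
  have dF: "(\<lambda>y. curv A y a b) differentiable (at x)" for a b
    by (rule curv_differentiable[OF U A])
  have "pd (\<lambda>y. \<Sum>j\<in>UNIV. \<Sum>k\<in>UNIV. omega_up (Ginv G y) (J y) j k *\<^sub>R curv A y j k) i x = pd (\<lambda>y. 0) i x"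
    by (rule pd_cong[OF U]) (simp add: tr)
  then have "(\<Sum>j\<in>UNIV. \<Sum>k\<in>UNIV. pd (\<lambda>y. omega_up (Ginv G y) (J y) j k) i x *\<^sub>R curv A x j k
      + omega_up (Ginv G x) (J x) j k *\<^sub>R pd (\<lambda>y. curv A y j k) i x) = 0"
    by (simp add: pd_sum pd_scaleR dOm dF pd_const add.commute)
  then show ?thesis
    unfolding Dplus_eq_cov_deriv
    by (rule cov_deriv_trace[OF tr[OF U(2)]]) (simp_all add: pd_omega_up[OF U KT] linear_matrix_commutator)
qed

lemma pd_curv:
  assumes U: "open U" "x \<in> U" and A: "\<forall>i. smooth_fn U (\<lambda>x. A x i)"
  shows "pd (\<lambda>y. curv A y i j) k x = pd (pd (\<lambda>y. A y j) i) k x - pd (pd (\<lambda>y. A y i) j) k x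
      + ((A x i ** pd (\<lambda>y. A y j) k x + pd (\<lambda>y. A y i) k x ** A x j)
        - (A x j ** pd (\<lambda>y. A y i) k x + pd (\<lambda>y. A y j) k x ** A x i))"
proof -
  have dA: "(\<lambda>y. A y i) differentiable (at x)" for i
    using smooth_fn_differentiable[OF U] A by blast
  have dpA: "pd (\<lambda>y. A y i) j differentiable (at x)" for i j
    using smooth_fn_differentiable[OF U smooth_fn_pd] A by blast
  show ?thesis
    unfolding curv_def
    by (simp add: pd_add pd_diff pd_matrix_mult dA dpA differentiable_matrix_mult)
qed

lemma curv_bianchi:
  assumes U: "open U" "x \<in> U" and A: "\<forall>i. smooth_fn U (\<lambda>x. A x i)"
  shows "pd (\<lambda>y. curv A y i j) k x + pd (\<lambda>y. curv A y j k) i x + pd (\<lambda>y. curv A y k i) j x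
      + (A x k ** curv A x i j - curv A x i j ** A x k) + (A x i ** curv A x j k - curv A x j k ** A x i)
      + (A x j ** curv A x k i - curv A x k i ** A x j) = 0"
proof -
  have "pd (pd (\<lambda>y. A y c) b) a x = pd (pd (\<lambda>y. A y c) a) b x" for a b c
    using A pd_pd_commute[OF U] by blast
  from gauge_bianchi[where a = "A x" and da = "\<lambda>k i. pd (\<lambda>y. A y i) k x"
      and dda = "\<lambda>k i j. pd (pd (\<lambda>y. A y j) i) k x", OF this]
  show ?thesis
    unfolding pd_curv[OF U A] by (simp add: curv_def)
qed

lemma Gplus_torsion:
  assumes U: "open U" "x \<in> U" and G: "riem_metric U G" and H: "three_form U H"
  shows "Gplus G H x k l i - Gplus G H x i l k = Hup G H x l k i"
proof -
  have "pd (\<lambda>y. G y k i) m x = pd (\<lambda>y. G y i k) m x" for m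
    by (rule pd_metric_sym[OF U G])
  then have "LC G x l k i = LC G x l i k"
    by (simp add: LC_def algebra_simps)
  moreover have "H x m i k = - H x m k i" for m
    by (rule three_form_antisym(2)[OF H U(2)])
  then have "Hup G H x l i k = - Hup G H x l k i"
    by (simp add: Hup_def sum_negf[symmetric])
  ultimately show ?thesis
    by (simp add: Gplus_def)
qed

lemma Dplus_curv_cyclic:
  assumes U: "open U" "x \<in> U" and G: "riem_metric U G" and H: "three_form U H"
    and A: "\<forall>i. smooth_fn U (\<lambda>x. A x i)"
  shows "Dplus G H A (curv A) x k i j + Dplus G H A (curv A) x i j k + Dplus G H A (curv A) x j k i
      = - (\<Sum>l\<in>UNIV. Hup G H x l k i *\<^sub>R curv A x l j + Hup G H x l j k *\<^sub>R curv A x l i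
           + Hup G H x l i j *\<^sub>R curv A x l k)"
  unfolding Dplus_eq_cov_deriv
  by (rule cov_deriv_cyclic) (rule Gplus_torsion[OF U G H] curv_antisym curv_bianchi[OF U A])+

lemma KT_curvature_divergence:
  assumes U: "open U" "x \<in> U" and KT: "KT U G J H" and A: "\<forall>i. smooth_fn U (\<lambda>x. A x i)"
    and F: "\<forall>y\<in>U. type11 J (curv A) y"
    and trace: "\<forall>y\<in>U. (\<Sum>i\<in>UNIV. \<Sum>j\<in>UNIV. Omup G J y i j *\<^sub>R curv A y i j) = 0"
  shows "(\<Sum>i\<in>UNIV. \<Sum>k\<in>UNIV. Ginv G x i k *\<^sub>R Dplus G H A (curv A) x k i j)
       = (\<Sum>i\<in>UNIV. \<Sum>k\<in>UNIV. (Ginv G x i k * Lee G J H x k) *\<^sub>R curv A x i j)"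
proof -
  interpret hermitian_point "G x" "Ginv G x" "J x"
    using hermitian_point_at[OF KT_D(1)[OF KT] U(2)] .
  have Lee: "Lee G J H x k = 1/2 * (\<Sum>a\<in>UNIV. \<Sum>b\<in>UNIV. \<Sum>c\<in>UNIV. J x a k * H x a b c * omega b c)" for k
    by (simp add: Lee_def Omup_eq_omega_up[OF KT_D(2)[OF KT] U(2)])
  have "(\<Sum>i\<in>UNIV. \<Sum>k\<in>UNIV. Ginv G x i k *\<^sub>R Dplus G H A (curv A) x k i j)
      = (\<Sum>i\<in>UNIV. \<Sum>k\<in>UNIV. (Ginv G x i k * (1/2 * (\<Sum>a\<in>UNIV. \<Sum>b\<in>UNIV. \<Sum>c\<in>UNIV.
          J x a k * H x a b c * omega b c))) *\<^sub>R curv A x i j)"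
  proof (rule divergence_identity)
    show "H x a b c = - H x b a c" "H x a b c = - H x a c b" for a b c
      by (rule three_form_antisym[OF KT_D(3)[OF KT] U(2)])+
    show "J_invariant (J x) (curv A x)"
      using F U(2) by (simp add: type11_iff_J_invariant)
    show "J_invariant (J x) (Dplus G H A (curv A) x k)" for k
      by (rule Dplus_curv_J_invariant[OF U KT A F])
    show "Dplus G H A (curv A) x k a b = - Dplus G H A (curv A) x k b a" for k a b
      by (rule Dplus_curv_antisym[OF U A])
    show "(\<Sum>j\<in>UNIV. \<Sum>k\<in>UNIV. omega j k *\<^sub>R Dplus G H A (curv A) x i j k) = 0" for i
      by (rule Dplus_curv_omega_trace[OF U KT A trace])
    show "Dplus G H A (curv A) x k i j + Dplus G H A (curv A) x i j k + Dplus G H A (curv A) x j k i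
        = - (\<Sum>l\<in>UNIV. raise_index (Ginv G x) (H x) l k i *\<^sub>R curv A x l j
             + raise_index (Ginv G x) (H x) l j k *\<^sub>R curv A x l i
             + raise_index (Ginv G x) (H x) l i j *\<^sub>R curv A x l k)" for k i j
      using Dplus_curv_cyclic[OF U KT_D(2,3)[OF KT] A] by (simp add: Hup_eq_raise_index)
  qed (rule curv_antisym)
  then show ?thesis by (simp only: Lee)
qed

lemma Dplus_scaleR:
  assumes "f differentiable (at x)" "\<And>a b. (\<lambda>y. T y a b) differentiable (at x)"
  shows "Dplus G H A (\<lambda>y a b. f y *\<^sub>R T y a b) x k i j
       = f x *\<^sub>R Dplus G H A T x k i j + pd f k x *\<^sub>R T x i j"
  unfolding Dplus_def pd_scaleR[OF assms(1) assms(2)]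
  by (simp add: scaleR_right_diff_distrib scaleR_right_distrib scaleR_sum_right matrix_scalar_ac
      scalar_matrix_assoc algebra_simps)

lemma Dplus_exp_scaleR:
  assumes U: "open U" "x \<in> U" and \<Phi>: "smooth_fn U \<Phi>" and A: "\<forall>i. smooth_fn U (\<lambda>x. A x i)"
  shows "Dplus G H A (\<lambda>y a b. exp (- 2 * \<Phi> y) *\<^sub>R curv A y a b) x k i j
       = exp (- 2 * \<Phi> x) *\<^sub>R (Dplus G H A (curv A) x k i j - (2 * pd \<Phi> k x) *\<^sub>R curv A x i j)"
proof -
  have d\<Phi>: "(\<lambda>y. - 2 * \<Phi> y) differentiable (at x)"
    using smooth_fn_differentiable[OF U \<Phi>] by simp
  have dE: "(\<lambda>y. exp (- 2 * \<Phi> y)) differentiable (at x)"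
    using has_derivative_exp[OF frechet_derivative_works[THEN iffD1, OF d\<Phi>]] unfolding differentiable_def by blast
  have "pd (\<lambda>y. - 2 * \<Phi> y) k x = - (2 * pd \<Phi> k x)"
    using pd_mult[OF differentiable_const smooth_fn_differentiable[OF U \<Phi>], of "- 2"] by (simp add: pd_const)
  then have "pd (\<lambda>y. exp (- 2 * \<Phi> y)) k x = - exp (- 2 * \<Phi> x) * (2 * pd \<Phi> k x)"
    using pd_exp[OF d\<Phi>, of k] by simp
  then show ?thesis
    using Dplus_scaleR[OF dE curv_differentiable[OF U A]] by (simp add: scaleR_right_diff_distrib)
qed

theorem mainTheorem7:
  fixes U :: "(real^'n) set" and m :: nat
    and G J :: "real^'n \<Rightarrow> 'n \<Rightarrow> 'n \<Rightarrow> real"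
    and H :: "real^'n \<Rightarrow> 'n \<Rightarrow> 'n \<Rightarrow> 'n \<Rightarrow> real"
    and \<Phi> :: "real^'n \<Rightarrow> real"
    and A :: "real^'n \<Rightarrow> 'n \<Rightarrow> complex^'r^'r"
  assumes "open U"
    and "CARD('n) = 2 * m"
    and "conf_balanced U G J H \<Phi>"
    and "\<forall>i. smooth_fn U (\<lambda>x. A x i)"
    and "\<forall>x\<in>U. type11 J (curv A) x"
    and "\<forall>x\<in>U. (\<Sum>i\<in>UNIV. \<Sum>j\<in>UNIV. Omup G J x i j *\<^sub>R curv A x i j) = 0"
  shows "\<forall>x\<in>U. \<forall>j. (\<Sum>i\<in>UNIV. \<Sum>k\<in>UNIV.
           Ginv G x i k *\<^sub>R Dplus G H A (\<lambda>y a b. exp (- 2 * \<Phi> y) *\<^sub>R curv A y a b) x k i j) = 0"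
proof (intro ballI allI)
  fix x j assume x: "x \<in> U"
  have KT: "KT U G J H" and \<Phi>: "smooth_fn U \<Phi>" and Lee: "\<And>k. 2 * pd \<Phi> k x = Lee G J H x k"
    using assms(3) x unfolding conf_balanced_def by auto
  have "(\<Sum>i\<in>UNIV. \<Sum>k\<in>UNIV.
        Ginv G x i k *\<^sub>R Dplus G H A (\<lambda>y a b. exp (- 2 * \<Phi> y) *\<^sub>R curv A y a b) x k i j)
      = exp (- 2 * \<Phi> x) *\<^sub>R ((\<Sum>i\<in>UNIV. \<Sum>k\<in>UNIV. Ginv G x i k *\<^sub>R Dplus G H A (curv A) x k i j)
          - (\<Sum>i\<in>UNIV. \<Sum>k\<in>UNIV. (Ginv G x i k * Lee G J H x k) *\<^sub>R curv A x i j))"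
    by (simp only: Dplus_exp_scaleR[OF assms(1) x \<Phi> assms(4)] Lee)
      (simp add: scaleR_right_diff_distrib scaleR_sum_right sum_subtractf mult_ac)
  also have "\<dots> = 0"
    by (simp add: KT_curvature_divergence[OF assms(1) x KT assms(4-6)])
  finally show "(\<Sum>i\<in>UNIV. \<Sum>k\<in>UNIV.
      Ginv G x i k *\<^sub>R Dplus G H A (\<lambda>y a b. exp (- 2 * \<Phi> y) *\<^sub>R curv A y a b) x k i j) = 0" .
qed

end
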